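(* Let $(H,R)$ be a semiquasitriangular Hopf algebra with Drinfeld element $u=S(R^{(2)})R^{(1)}$, and let $R_{21}=R^{(2)}\otimes R^{(1)}$. Then $\epsilon(u)=1$ and $$\Delta(u)=(R_{21}R)^{-1}(u\otimes u)=(u\otimes u)(R_{21}R)^{-1},$$ $$\Delta(S(u))=(R_{21}R)^{-1}(S(u)\otimes S(u))=(S(u)\otimes S(u))(R_{21}R)^{-1},$$ $$\Delta(uS(u))=(R_{21}R)^{-2}(uS(u)\otimes uS(u))=(uS(u)\otimes uS(u))(R_{21}R)^{-2}.$$
   Context: All vector spaces are over a field $k$, $\otimes=\otimes_k$. For a Hopf algebra $H$ with comultiplication $\Delta$, counit $\epsilon$, antipode $S$, we use Sweedler notation $\Delta(h)=h_1\otimes h_2$, etc. $\operatorname{Z}(H)$ is the centre of $H$. For $R\in H\otimes H$ we write $R=R^{(1)}\otimes R^{(2)}$ (summation understood); $R'^{(1)}\otimes R'^{(2)}$ denotes another copy of $R$. Definition (semiquasitriangular Hopf algebra): a pair $(H,R)$ with $H$ a Hopf algebra with bijective antipode and $R\in H\otimes H$ invertible such that (1) $R^{(1)}_1\otimes R^{(1)}_2\otimes R^{(2)} = R^{(1)}\otimes R'^{(1)}\otimes R^{(2)}R'^{(2)}$; (2) $R^{(1)}\otimes R^{(2)}_1\otimes R^{(2)}_2 = R^{(1)}R'^{(1)}\otimes R'^{(2)}\otimes R^{(2)}$; (3) $R^{(1)}\otimes R^{(2)}_2R'^{(1)}\otimes R^{(2)}_1R'^{(2)} = R^{(1)}\otimes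 R'^{(1)}R^{(2)}_1\otimes R'^{(2)}R^{(2)}_2$; (4) $R^{(1)}_2R'^{(1)}\otimes R^{(1)}_1R'^{(2)}\otimes R^{(2)} = R'^{(1)}R^{(1)}_1\otimes R'^{(2)}R^{(1)}_2\otimes R^{(2)}$; (5) $\nu(h):=R^{(2)}h_2R'^{(2)}\otimes S(h_1)S(R^{(1)})h_3R'^{(1)}\in H\otimes\operatorname{Z}(H)$ for all $h\in H$; (6) $\nu(h)=R^{(1)}h_2R'^{(1)}\otimes S(R'^{(2)})S(h_1)R^{(2)}h_3$ for all $h\in H$. *)

theory Defs
  imports Complex_Main
begin

definition k_algebra :: "('k::field \<Rightarrow> 'a::ring_1 \<Rightarrow> 'a) \<Rightarrow> bool" where
  "k_algebra s \<longleftrightarrow> Vector_Spaces.vector_space s \<and>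
     (\<forall>c x y. s c (x * y) = s c x * y \<and> s c (x * y) = x * s c y)"

definition bilinear_map ::
  "('k::field \<Rightarrow> 'h::ab_group_add \<Rightarrow> 'h) \<Rightarrow> ('k \<Rightarrow> 'v::ab_group_add \<Rightarrow> 'v)
     \<Rightarrow> ('h \<Rightarrow> 'h \<Rightarrow> 'v) \<Rightarrow> bool" where
  "bilinear_map sH sV f \<longleftrightarrow>
     (\<forall>a. Vector_Spaces.linear sH sV (f a)) \<and> (\<forall>b. Vector_Spaces.linear sH sV (\<lambda>a. f a b))"

definition trilinear_map ::
  "('k::field \<Rightarrow> 'h::ab_group_add \<Rightarrow> 'h) \<Rightarrow> ('k \<Rightarrow> 'v::ab_group_add \<Rightarrow> 'v)
     \<Rightarrow> ('h \<Rightarrow> 'h \<Rightarrow> 'h \<Rightarrow> 'v) \<Rightarrow> bool" where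
  "trilinear_map sH sV f \<longleftrightarrow>
     (\<forall>a b. Vector_Spaces.linear sH sV (f a b)) \<and> (\<forall>a c. Vector_Spaces.linear sH sV (\<lambda>b. f a b c))
     \<and> (\<forall>b c. Vector_Spaces.linear sH sV (\<lambda>a. f a b c))"

text \<open>(t2 : H \<times> H \<rightarrow> HH) is a tensor product H \<otimes> H: a bilinear map whose image spans HH and
  which maps (B \<times> C) injectively onto a linearly independent set whenever B, C are linearly
  independent (equivalently: for bases B, C of H, the t2 b c form a basis of HH).\<close>
definition is_tensor2 ::
  "('k::field \<Rightarrow> 'h::ab_group_add \<Rightarrow> 'h) \<Rightarrow> ('k \<Rightarrow> 'hh::ab_group_add \<Rightarrow> 'hh)
     \<Rightarrow> ('h \<Rightarrow> 'h \<Rightarrow> 'hh) \<Rightarrow> bool" where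
  "is_tensor2 sH s2 t2 \<longleftrightarrow> Vector_Spaces.vector_space sH \<and> Vector_Spaces.vector_space s2 \<and> bilinear_map sH s2 t2 \<and>
     module.span s2 (range (case_prod t2)) = UNIV \<and>
     (\<forall>B C. \<not> module.dependent sH B \<and> \<not> module.dependent sH C \<longrightarrow>
        inj_on (case_prod t2) (B \<times> C) \<and> \<not> module.dependent s2 (case_prod t2 ` (B \<times> C)))"

definition is_tensor3 ::
  "('k::field \<Rightarrow> 'h::ab_group_add \<Rightarrow> 'h) \<Rightarrow> ('k \<Rightarrow> 'hhh::ab_group_add \<Rightarrow> 'hhh)
     \<Rightarrow> ('h \<Rightarrow> 'h \<Rightarrow> 'h \<Rightarrow> 'hhh) \<Rightarrow> bool" where
  "is_tensor3 sH s3 t3 \<longleftrightarrow> Vector_Spaces.vector_space sH \<and> Vector_Spaces.vector_space s3 \<and> trilinear_map sH s3 t3 \<and>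
     module.span s3 (range (\<lambda>(a, b, c). t3 a b c)) = UNIV \<and>
     (\<forall>B C D. \<not> module.dependent sH B \<and> \<not> module.dependent sH C \<and> \<not> module.dependent sH D \<longrightarrow>
        inj_on (\<lambda>(a, b, c). t3 a b c) (B \<times> C \<times> D) \<and>
        \<not> module.dependent s3 ((\<lambda>(a, b, c). t3 a b c) ` (B \<times> C \<times> D)))"

definition tensor_algebra2 ::
  "('k::field \<Rightarrow> 'h::ring_1 \<Rightarrow> 'h) \<Rightarrow> ('k \<Rightarrow> 'hh::ring_1 \<Rightarrow> 'hh) \<Rightarrow> ('h \<Rightarrow> 'h \<Rightarrow> 'hh) \<Rightarrow> bool" where
  "tensor_algebra2 sH s2 t2 \<longleftrightarrow> is_tensor2 sH s2 t2 \<and> k_algebra s2 \<and>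
     (\<forall>a b c d. t2 a b * t2 c d = t2 (a * c) (b * d)) \<and> t2 1 1 = 1"

definition tensor_algebra3 ::
  "('k::field \<Rightarrow> 'h::ring_1 \<Rightarrow> 'h) \<Rightarrow> ('k \<Rightarrow> 'hhh::ring_1 \<Rightarrow> 'hhh) \<Rightarrow> ('h \<Rightarrow> 'h \<Rightarrow> 'h \<Rightarrow> 'hhh) \<Rightarrow> bool" where
  "tensor_algebra3 sH s3 t3 \<longleftrightarrow> is_tensor3 sH s3 t3 \<and> k_algebra s3 \<and>
     (\<forall>a b c a' b' c'. t3 a b c * t3 a' b' c' = t3 (a * a') (b * b') (c * c')) \<and> t3 1 1 1 = 1"

text \<open>Linear extension of a bilinear (trilinear) map along the tensor product
  (well defined by the universal property; this is how Sweedler sums are interpreted).\<close>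
definition lift2 ::
  "('k::field \<Rightarrow> 'hh::ab_group_add \<Rightarrow> 'hh) \<Rightarrow> ('k \<Rightarrow> 'v::ab_group_add \<Rightarrow> 'v)
     \<Rightarrow> ('h \<Rightarrow> 'h \<Rightarrow> 'hh) \<Rightarrow> ('h \<Rightarrow> 'h \<Rightarrow> 'v) \<Rightarrow> 'hh \<Rightarrow> 'v" where
  "lift2 s2 sV t2 f = (SOME g. Vector_Spaces.linear s2 sV g \<and> (\<forall>a b. g (t2 a b) = f a b))"

definition lift3 ::
  "('k::field \<Rightarrow> 'hhh::ab_group_add \<Rightarrow> 'hhh) \<Rightarrow> ('k \<Rightarrow> 'v::ab_group_add \<Rightarrow> 'v)
     \<Rightarrow> ('h \<Rightarrow> 'h \<Rightarrow> 'h \<Rightarrow> 'hhh) \<Rightarrow> ('h \<Rightarrow> 'h \<Rightarrow> 'h \<Rightarrow> 'v) \<Rightarrow> 'hhh \<Rightarrow> 'v" where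
  "lift3 s3 sV t3 f = (SOME g. Vector_Spaces.linear s3 sV g \<and> (\<forall>a b c. g (t3 a b c) = f a b c))"

definition rinv :: "'a::ring_1 \<Rightarrow> 'a" where
  "rinv x = (THE y. x * y = 1 \<and> y * x = 1)"

definition center :: "'a::ring_1 set" where
  "center = {z. \<forall>x. z * x = x * z}"

definition delta_id ::
  "('k::field \<Rightarrow> 'hh::ab_group_add \<Rightarrow> 'hh) \<Rightarrow> ('k \<Rightarrow> 'hhh::ab_group_add \<Rightarrow> 'hhh)
    \<Rightarrow> ('h \<Rightarrow> 'h \<Rightarrow> 'hh) \<Rightarrow> ('h \<Rightarrow> 'h \<Rightarrow> 'h \<Rightarrow> 'hhh) \<Rightarrow> ('h \<Rightarrow> 'hh) \<Rightarrow> 'hh \<Rightarrow> 'hhh" where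
  "delta_id s2 s3 t2 t3 \<Delta> = lift2 s2 s3 t2 (\<lambda>a b. lift2 s2 s3 t2 (\<lambda>c d. t3 c d b) (\<Delta> a))"

definition id_delta ::
  "('k::field \<Rightarrow> 'hh::ab_group_add \<Rightarrow> 'hh) \<Rightarrow> ('k \<Rightarrow> 'hhh::ab_group_add \<Rightarrow> 'hhh)
    \<Rightarrow> ('h \<Rightarrow> 'h \<Rightarrow> 'hh) \<Rightarrow> ('h \<Rightarrow> 'h \<Rightarrow> 'h \<Rightarrow> 'hhh) \<Rightarrow> ('h \<Rightarrow> 'hh) \<Rightarrow> 'hh \<Rightarrow> 'hhh" where
  "id_delta s2 s3 t2 t3 \<Delta> = lift2 s2 s3 t2 (\<lambda>a b. lift2 s2 s3 t2 (\<lambda>c d. t3 a c d) (\<Delta> b))"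

definition hopf_algebra ::
  "('k::field \<Rightarrow> 'h::ring_1 \<Rightarrow> 'h) \<Rightarrow> ('k \<Rightarrow> 'hh::ring_1 \<Rightarrow> 'hh) \<Rightarrow> ('h \<Rightarrow> 'h \<Rightarrow> 'hh)
    \<Rightarrow> ('k \<Rightarrow> 'hhh::ring_1 \<Rightarrow> 'hhh) \<Rightarrow> ('h \<Rightarrow> 'h \<Rightarrow> 'h \<Rightarrow> 'hhh)
    \<Rightarrow> ('h \<Rightarrow> 'hh) \<Rightarrow> ('h \<Rightarrow> 'k) \<Rightarrow> ('h \<Rightarrow> 'h) \<Rightarrow> bool" where
  "hopf_algebra sH s2 t2 s3 t3 \<Delta> \<epsilon> S \<longleftrightarrow>
     k_algebra sH \<and> tensor_algebra2 sH s2 t2 \<and> tensor_algebra3 sH s3 t3 \<and>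
     Vector_Spaces.linear sH s2 \<Delta> \<and> \<Delta> 1 = 1 \<and> (\<forall>x y. \<Delta> (x * y) = \<Delta> x * \<Delta> y) \<and>
     Vector_Spaces.linear sH (*) \<epsilon> \<and> \<epsilon> 1 = 1 \<and> (\<forall>x y. \<epsilon> (x * y) = \<epsilon> x * \<epsilon> y) \<and>
     (\<forall>h. delta_id s2 s3 t2 t3 \<Delta> (\<Delta> h) = id_delta s2 s3 t2 t3 \<Delta> (\<Delta> h)) \<and>
     (\<forall>h. lift2 s2 sH t2 (\<lambda>a b. sH (\<epsilon> a) b) (\<Delta> h) = h) \<and>
     (\<forall>h. lift2 s2 sH t2 (\<lambda>a b. sH (\<epsilon> b) a) (\<Delta> h) = h) \<and>
     Vector_Spaces.linear sH sH S \<and>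
     (\<forall>h. lift2 s2 sH t2 (\<lambda>a b. S a * b) (\<Delta> h) = sH (\<epsilon> h) 1) \<and>
     (\<forall>h. lift2 s2 sH t2 (\<lambda>a b. a * S b) (\<Delta> h) = sH (\<epsilon> h) 1)"

text \<open>Throughout, lift2 ... (\<lambda>a b. ...) R stands for the Sweedler sum over R = a \<otimes> b.\<close>
definition semiquasitriangular ::
  "('k::field \<Rightarrow> 'h::ring_1 \<Rightarrow> 'h) \<Rightarrow> ('k \<Rightarrow> 'hh::ring_1 \<Rightarrow> 'hh) \<Rightarrow> ('h \<Rightarrow> 'h \<Rightarrow> 'hh)
    \<Rightarrow> ('k \<Rightarrow> 'hhh::ring_1 \<Rightarrow> 'hhh) \<Rightarrow> ('h \<Rightarrow> 'h \<Rightarrow> 'h \<Rightarrow> 'hhh)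
    \<Rightarrow> ('h \<Rightarrow> 'hh) \<Rightarrow> ('h \<Rightarrow> 'k) \<Rightarrow> ('h \<Rightarrow> 'h) \<Rightarrow> 'hh \<Rightarrow> bool" where
  "semiquasitriangular sH s2 t2 s3 t3 \<Delta> \<epsilon> S R \<longleftrightarrow>
     hopf_algebra sH s2 t2 s3 t3 \<Delta> \<epsilon> S \<and> bij S \<and>
     (\<exists>R'. R * R' = 1 \<and> R' * R = 1) \<and>
     \<comment> \<open>(1)\<close>
     lift2 s2 s3 t2 (\<lambda>a b. lift2 s2 s3 t2 (\<lambda>c d. t3 c d b) (\<Delta> a)) R =
       lift2 s2 s3 t2 (\<lambda>a b. lift2 s2 s3 t2 (\<lambda>c d. t3 a c (b * d)) R) R \<and>
     \<comment> \<open>(2)\<close>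
     lift2 s2 s3 t2 (\<lambda>a b. lift2 s2 s3 t2 (\<lambda>c d. t3 a c d) (\<Delta> b)) R =
       lift2 s2 s3 t2 (\<lambda>a b. lift2 s2 s3 t2 (\<lambda>c d. t3 (a * c) d b) R) R \<and>
     \<comment> \<open>(3)\<close>
     lift2 s2 s3 t2 (\<lambda>a b. lift2 s2 s3 t2 (\<lambda>b1 b2.
         lift2 s2 s3 t2 (\<lambda>c d. t3 a (b2 * c) (b1 * d)) R) (\<Delta> b)) R =
       lift2 s2 s3 t2 (\<lambda>a b. lift2 s2 s3 t2 (\<lambda>b1 b2.
         lift2 s2 s3 t2 (\<lambda>c d. t3 a (c * b1) (d * b2)) R) (\<Delta> b)) R \<and>
     \<comment> \<open>(4)\<close>
     lift2 s2 s3 t2 (\<lambda>a b. lift2 s2 s3 t2 (\<lambda>a1 a2.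
         lift2 s2 s3 t2 (\<lambda>c d. t3 (a2 * c) (a1 * d) b) R) (\<Delta> a)) R =
       lift2 s2 s3 t2 (\<lambda>a b. lift2 s2 s3 t2 (\<lambda>a1 a2.
         lift2 s2 s3 t2 (\<lambda>c d. t3 (c * a1) (d * a2) b) R) (\<Delta> a)) R \<and>
     \<comment> \<open>(5)\<close>
     (\<forall>h. lift3 s3 s2 t3 (\<lambda>h1 h2 h3. lift2 s2 s2 t2 (\<lambda>a b.
            lift2 s2 s2 t2 (\<lambda>c d. t2 (b * h2 * d) (S h1 * S a * h3 * c)) R) R)
          (delta_id s2 s3 t2 t3 \<Delta> (\<Delta> h))
        \<in> module.span s2 {t2 x z | x z. z \<in> center}) \<and>
     \<comment> \<open>(6)\<close>
     (\<forall>h. lift3 s3 s2 t3 (\<lambda>h1 h2 h3. lift2 s2 s2 t2 (\<lambda>a b.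
            lift2 s2 s2 t2 (\<lambda>c d. t2 (b * h2 * d) (S h1 * S a * h3 * c)) R) R)
          (delta_id s2 s3 t2 t3 \<Delta> (\<Delta> h)) =
        lift3 s3 s2 t3 (\<lambda>h1 h2 h3. lift2 s2 s2 t2 (\<lambda>a b.
            lift2 s2 s2 t2 (\<lambda>c d. t2 (a * h2 * c) (S d * S h1 * b * h3)) R) R)
          (delta_id s2 s3 t2 t3 \<Delta> (\<Delta> h)))"

definition drinfeld_u ::
  "('k::field \<Rightarrow> 'h::ring_1 \<Rightarrow> 'h) \<Rightarrow> ('k \<Rightarrow> 'hh::ring_1 \<Rightarrow> 'hh) \<Rightarrow> ('h \<Rightarrow> 'h \<Rightarrow> 'hh)
    \<Rightarrow> ('h \<Rightarrow> 'h) \<Rightarrow> 'hh \<Rightarrow> 'h" where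
  "drinfeld_u sH s2 t2 S R = lift2 s2 sH t2 (\<lambda>a b. S b * a) R"

definition R21 ::
  "('k::field \<Rightarrow> 'hh::ring_1 \<Rightarrow> 'hh) \<Rightarrow> ('h \<Rightarrow> 'h \<Rightarrow> 'hh) \<Rightarrow> 'hh \<Rightarrow> 'hh" where
  "R21 s2 t2 R = lift2 s2 s2 t2 (\<lambda>a b. t2 b a) R"

end

theory Submission
  imports Defs
begin

text \<open>Write \<open>R = \<Sum>\<^sub>i a\<^sub>i \<otimes> b\<^sub>i\<close> with a representation of minimal length, so that both families
  of legs are linearly independent. Evaluating axioms (4) and (3) on dual functionals of the
  \<open>b\<^sub>i\<close> resp. \<open>a\<^sub>i\<close> shows that every leg \<open>x\<close> of \<open>R\<close> satisfies \<open>\<Delta>\<^sup>o\<^sup>p(x) R = R \<Delta>(x)\<close>, and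
  axioms (1), (2) show that the coproduct of a leg has first legs of this kind. For such \<open>x\<close>
  Drinfeld's argument gives \<open>u x = S\<^sup>2(x) u\<close>, so \<open>u \<otimes> u\<close> commutes with \<open>R\<close> and \<open>R\<^sub>2\<^sub>1\<close>.
  Together with \<open>R\<^sup>-\<^sup>1 = (S \<otimes> id) R\<close> and \<open>(S \<otimes> S) R = R\<close>, which follow from (1), (2) and the
  antipode axioms, Drinfeld's computation yields \<open>\<Delta>(u) = R\<^sup>-\<^sup>1 (u \<otimes> u) R\<^sub>2\<^sub>1\<^sup>-\<^sup>1 = (R\<^sub>2\<^sub>1R)\<^sup>-\<^sup>1 (u \<otimes> u)\<close>.
  The antimultiplicative map \<open>(S \<otimes> S) \<circ> flip\<close> sends \<open>\<Delta>(x)\<close> to \<open>\<Delta>(S x)\<close> and fixes \<open>R\<^sub>2\<^sub>1R\<close>,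
  which gives \<open>\<Delta>(S u)\<close>; the formula for \<open>\<Delta>(u S(u))\<close> is the product of the two.\<close>

lemma vector_space_pairI: "vector_space s1 \<Longrightarrow> vector_space s2 \<Longrightarrow> vector_space_pair s1 s2"
  by (simp add: vector_space_pair_def)

lemma vector_space_field: "vector_space ((*) :: 'a::field \<Rightarrow> 'a \<Rightarrow> 'a)"
  by (simp add: vector_space_def module_def algebra_simps)

lemma linearI:
  "vector_space s1 \<Longrightarrow> vector_space s2 \<Longrightarrow> (\<And>x y. f (x + y) = f x + f y)
    \<Longrightarrow> (\<And>c x. f (s1 c x) = s2 c (f x)) \<Longrightarrow> Vector_Spaces.linear s1 s2 f"
  by (simp add: Vector_Spaces.linear_iff)

lemma lin_add: "Vector_Spaces.linear s1 s2 f \<Longrightarrow> f (x + y) = f x + f y"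
  by (simp add: Vector_Spaces.linear_iff)

lemma lin_scale: "Vector_Spaces.linear s1 s2 f \<Longrightarrow> f (s1 c x) = s2 c (f x)"
  by (simp add: Vector_Spaces.linear_iff)

lemma lin_sum: "Vector_Spaces.linear s1 s2 f \<Longrightarrow> f (sum g I) = (\<Sum>i\<in>I. f (g i))"
  by (metis linear_iff_module_hom module_hom.sum)

lemma lin_diff: "Vector_Spaces.linear s1 s2 f \<Longrightarrow> f (x - y) = f x - f y"
  by (metis linear_iff_module_hom module_hom.diff)

lemma lin_neg: "Vector_Spaces.linear s1 s2 f \<Longrightarrow> f (- x) = - f x"
  by (metis linear_iff_module_hom module_hom.neg)

lemma lin_comp:
  "Vector_Spaces.linear s1 s2 f \<Longrightarrow> Vector_Spaces.linear s2 s3 g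
    \<Longrightarrow> Vector_Spaces.linear s1 s3 (\<lambda>x. g (f x))"
  using Vector_Spaces.linear_compose[of s1 s2 f s3 g] by (simp add: o_def)

lemma bilinear_mapI:
  "(\<And>a. Vector_Spaces.linear sH sV (f a)) \<Longrightarrow> (\<And>b. Vector_Spaces.linear sH sV (\<lambda>a. f a b))
    \<Longrightarrow> bilinear_map sH sV f"
  by (simp add: bilinear_map_def)

lemma trilinear_mapI:
  "(\<And>a b. Vector_Spaces.linear sH sV (f a b)) \<Longrightarrow> (\<And>a c. Vector_Spaces.linear sH sV (\<lambda>b. f a b c))
    \<Longrightarrow> (\<And>b c. Vector_Spaces.linear sH sV (\<lambda>a. f a b c)) \<Longrightarrow> trilinear_map sH sV f"
  by (simp add: trilinear_map_def)

lemma tensor2_lift: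
  assumes T: "is_tensor2 sH s2 t2" and V: "vector_space sV" and f: "bilinear_map sH sV f"
  shows "Vector_Spaces.linear s2 sV (lift2 s2 sV t2 f)" and "lift2 s2 sV t2 f (t2 a b) = f a b"
proof -
  have vH: "vector_space sH" and v2: "vector_space s2" and t: "bilinear_map sH s2 t2"
    and indep: "\<And>B C. \<not> module.dependent sH B \<Longrightarrow> \<not> module.dependent sH C \<Longrightarrow>
        inj_on (case_prod t2) (B \<times> C) \<and> \<not> module.dependent s2 (case_prod t2 ` (B \<times> C))"
    using T unfolding is_tensor2_def by blast+
  interpret H: vector_space sH by (rule vH)
  interpret p2V: vector_space_pair s2 sV by (rule vector_space_pairI[OF v2 V])
  interpret pHV: vector_space_pair sH sV by (rule vector_space_pairI[OF vH V])
  obtain E where E: "H.independent E" "UNIV \<subseteq> H.span E"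
    using H.basis_exists[of UNIV] by blast
  have inj: "inj_on (case_prod t2) (E \<times> E)" and ind: "\<not> module.dependent s2 (case_prod t2 ` (E \<times> E))"
    using indep[OF E(1) E(1)] by auto
  obtain g where g: "Vector_Spaces.linear s2 sV g"
    and gE: "\<forall>v\<in>case_prod t2 ` (E \<times> E). g v = case_prod f (the_inv_into (E \<times> E) (case_prod t2) v)"
    using p2V.linear_independent_extend[OF ind, of "\<lambda>v. case_prod f (the_inv_into (E \<times> E) (case_prod t2) v)"]
    by blast
  have on_basis: "g (t2 a b) = f a b" if "a \<in> E" "b \<in> E" for a b
    using gE that the_inv_into_f_f[OF inj, of "(a, b)"] by force
  have on_left_basis: "g (t2 a b) = f a b" if "a \<in> E" for a b
    by (rule pHV.linear_eq_on[where B = E, OF lin_comp[OF _ g] _ _ on_basis[OF that]])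
      (use t f E(2) in \<open>auto simp: bilinear_map_def\<close>)
  have "g (t2 a b) = f a b" for a b
    by (rule pHV.linear_eq_on[where B = E, OF lin_comp[OF _ g] _ _ on_left_basis])
      (use t f E(2) in \<open>auto simp: bilinear_map_def\<close>)
  with g have "\<exists>g. Vector_Spaces.linear s2 sV g \<and> (\<forall>a b. g (t2 a b) = f a b)" by blast
  then have "Vector_Spaces.linear s2 sV (lift2 s2 sV t2 f) \<and> (\<forall>a b. lift2 s2 sV t2 f (t2 a b) = f a b)"
    unfolding lift2_def by (rule someI_ex)
  then show "Vector_Spaces.linear s2 sV (lift2 s2 sV t2 f)" "lift2 s2 sV t2 f (t2 a b) = f a b"
    by auto
qed

lemma tensor3_lift:
  assumes T: "is_tensor3 sH s3 t3" and V: "vector_space sV" and f: "trilinear_map sH sV f"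
  shows "Vector_Spaces.linear s3 sV (lift3 s3 sV t3 f)" and "lift3 s3 sV t3 f (t3 a b c) = f a b c"
proof -
  let ?t = "\<lambda>(a, b, c). t3 a b c"
  have vH: "vector_space sH" and v3: "vector_space s3" and t: "trilinear_map sH s3 t3"
    and indep: "\<And>B C D. \<not> module.dependent sH B \<Longrightarrow> \<not> module.dependent sH C \<Longrightarrow>
        \<not> module.dependent sH D \<Longrightarrow> inj_on ?t (B \<times> C \<times> D) \<and> \<not> module.dependent s3 (?t ` (B \<times> C \<times> D))"
    using T unfolding is_tensor3_def by blast+
  interpret H: vector_space sH by (rule vH)
  interpret p3V: vector_space_pair s3 sV by (rule vector_space_pairI[OF v3 V])
  interpret pHV: vector_space_pair sH sV by (rule vector_space_pairI[OF vH V])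
  obtain E where E: "H.independent E" "UNIV \<subseteq> H.span E"
    using H.basis_exists[of UNIV] by blast
  have inj: "inj_on ?t (E \<times> E \<times> E)" and ind: "\<not> module.dependent s3 (?t ` (E \<times> E \<times> E))"
    using indep[OF E(1) E(1) E(1)] by auto
  obtain g where g: "Vector_Spaces.linear s3 sV g"
    and gE: "\<forall>v\<in>?t ` (E \<times> E \<times> E). g v = (\<lambda>(a, b, c). f a b c) (the_inv_into (E \<times> E \<times> E) ?t v)"
    using p3V.linear_independent_extend[OF ind, of "\<lambda>v. (\<lambda>(a, b, c). f a b c) (the_inv_into (E \<times> E \<times> E) ?t v)"]
    by blast
  have on_basis: "g (t3 a b c) = f a b c" if "a \<in> E" "b \<in> E" "c \<in> E" for a b c
    using gE that the_inv_into_f_f[OF inj, of "(a, b, c)"] by force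
  have on_basis2: "g (t3 a b c) = f a b c" if "a \<in> E" "b \<in> E" for a b c
    by (rule pHV.linear_eq_on[where B = E, OF lin_comp[OF _ g] _ _ on_basis[OF that]])
      (use t f E(2) in \<open>auto simp: trilinear_map_def\<close>)
  have on_basis1: "g (t3 a b c) = f a b c" if "a \<in> E" for a b c
    by (rule pHV.linear_eq_on[where B = E, OF lin_comp[OF _ g] _ _ on_basis2[OF that]])
      (use t f E(2) in \<open>auto simp: trilinear_map_def\<close>)
  have "g (t3 a b c) = f a b c" for a b c
    by (rule pHV.linear_eq_on[where B = E, OF lin_comp[OF _ g] _ _ on_basis1])
      (use t f E(2) in \<open>auto simp: trilinear_map_def\<close>)
  with g have "\<exists>g. Vector_Spaces.linear s3 sV g \<and> (\<forall>a b c. g (t3 a b c) = f a b c)" by blast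
  then have "Vector_Spaces.linear s3 sV (lift3 s3 sV t3 f) \<and> (\<forall>a b c. lift3 s3 sV t3 f (t3 a b c) = f a b c)"
    unfolding lift3_def by (rule someI_ex)
  then show "Vector_Spaces.linear s3 sV (lift3 s3 sV t3 f)" "lift3 s3 sV t3 f (t3 a b c) = f a b c"
    by auto
qed

lemma minimal_tensor_rep_exists:
  fixes \<tau> :: "'h \<Rightarrow> 'h \<Rightarrow> 'v::comm_monoid_add"
  assumes "finite (I\<^sub>0 :: nat set)" and "y = (\<Sum>i\<in>I\<^sub>0. \<tau> (A\<^sub>0 i) (B\<^sub>0 i))"
  shows "\<exists>(I::nat set) A B. finite I \<and> y = (\<Sum>i\<in>I. \<tau> (A i) (B i)) \<and>
    (\<forall>(J::nat set) A' B'. finite J \<and> y = (\<Sum>i\<in>J. \<tau> (A' i) (B' i)) \<longrightarrow> card I \<le> card J)"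
proof -
  define P where "P m \<longleftrightarrow> (\<exists>(I::nat set) A B. finite I \<and> card I = m \<and> y = (\<Sum>i\<in>I. \<tau> (A i) (B i)))" for m
  have "P (card I\<^sub>0)" unfolding P_def using assms by blast
  then have "P (LEAST m. P m)" by (rule LeastI)
  then obtain I :: "nat set" and A B
    where I: "finite I" "card I = (LEAST m. P m)" "y = (\<Sum>i\<in>I. \<tau> (A i) (B i))"
    unfolding P_def by blast
  have "card I \<le> card J" if "finite J" "y = (\<Sum>i\<in>J. \<tau> (A' i) (B' i))" for J :: "nat set" and A' B'
    unfolding I(2) by (rule Least_le) (use that in \<open>unfold P_def, blast\<close>)
  then show ?thesis using I by blast
qed

text \<open>If a leg were a linear combination of the others, its term could be absorbed into theirs,
  giving a shorter representation.\<close>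

locale minimal_tensor_rep =
  fixes sH :: "'k::field \<Rightarrow> 'h::ab_group_add \<Rightarrow> 'h" and s2 :: "'k \<Rightarrow> 'hh::ab_group_add \<Rightarrow> 'hh"
    and \<tau> :: "'h \<Rightarrow> 'h \<Rightarrow> 'hh" and y :: 'hh and I :: "nat set" and A B :: "nat \<Rightarrow> 'h"
  assumes bilinear: "bilinear_map sH s2 \<tau>"
    and finite_index: "finite I"
    and rep: "y = (\<Sum>i\<in>I. \<tau> (A i) (B i))"
    and minimal: "\<And>(J::nat set) A' B'. finite J \<Longrightarrow> y = (\<Sum>i\<in>J. \<tau> (A' i) (B' i)) \<Longrightarrow> card I \<le> card J"
begin

lemma linear_left: "Vector_Spaces.linear sH s2 (\<lambda>a. \<tau> a b)"
  and linear_right: "Vector_Spaces.linear sH s2 (\<tau> a)"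
  using bilinear by (simp_all add: bilinear_map_def)

lemma no_shorter_rep: "k \<in> I \<Longrightarrow> y \<noteq> (\<Sum>i\<in>I - {k}. \<tau> (A i) (B' i))"
  using minimal[of "I - {k}" A B'] card_Diff1_less[OF finite_index] finite_index by fastforce

lemma inj_on_left: "inj_on A I"
proof
  fix i k assume ik: "i \<in> I" "k \<in> I" "A i = A k"
  show "i = k"
  proof (rule ccontr)
    assume "i \<noteq> k"
    define B' where "B' = B(i := B i + B k)"
    have iJ: "i \<in> I - {k}" using ik \<open>i \<noteq> k\<close> by simp
    have "(\<Sum>l\<in>I - {k}. \<tau> (A l) (B' l)) =
        (\<Sum>l\<in>I - {k}. \<tau> (A l) (B l) + (if l = i then \<tau> (A k) (B k) else 0))"
      unfolding B'_def using ik(3) by (intro sum.cong) (simp_all add: lin_add[OF linear_right])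
    also have "\<dots> = (\<Sum>l\<in>I - {k}. \<tau> (A l) (B l)) + \<tau> (A k) (B k)"
      using iJ finite_index by (simp add: sum.distrib)
    also have "\<dots> = y"
      unfolding rep using sum.remove[OF finite_index ik(2), of "\<lambda>l. \<tau> (A l) (B l)"]
      by (simp add: add.commute)
    finally show False using no_shorter_rep[OF ik(2), of B'] by simp
  qed
qed

lemma independent_left: "\<not> module.dependent sH (A ` I)"
proof
  interpret H: vector_space sH
    using linear_right by (simp add: Vector_Spaces.linear_iff)
  assume "H.dependent (A ` I)"
  then obtain u where u: "\<exists>v\<in>A ` I. u v \<noteq> 0" "(\<Sum>v\<in>A ` I. sH (u v) v) = 0"
    using H.dependent_finite[of "A ` I"] finite_index by blast
  define c where "c i = u (A i)" for i
  obtain k where k: "k \<in> I" "c k \<noteq> 0" using u(1) unfolding c_def by blast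
  have "(\<Sum>i\<in>I. sH (c i) (A i)) = 0"
    using u(2) unfolding c_def sum.reindex[OF inj_on_left] by simp
  then have "sH (c k) (A k) + (\<Sum>i\<in>I - {k}. sH (c i) (A i)) = 0"
    using k finite_index by (subst (asm) sum.remove[of _ k]) auto
  then have "sH (c k) (A k) = - (\<Sum>i\<in>I - {k}. sH (c i) (A i))"
    by (simp add: eq_neg_iff_add_eq_0)
  then have "sH (inverse (c k)) (sH (c k) (A k)) = - (\<Sum>i\<in>I - {k}. sH (inverse (c k) * c i) (A i))"
    by (simp add: H.scale_sum_right)
  then have Ak: "A k = - (\<Sum>i\<in>I - {k}. sH (c i / c k) (A i))"
    using k(2) by (simp add: divide_inverse mult.commute)
  define B' where "B' i = B i - sH (c i / c k) (B k)" for i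
  have "(\<Sum>l\<in>I - {k}. \<tau> (A l) (sH (c l / c k) (B k))) = \<tau> (\<Sum>l\<in>I - {k}. sH (c l / c k) (A l)) (B k)"
    by (simp add: lin_sum[OF linear_left] lin_scale[OF linear_left] lin_scale[OF linear_right])
  also have "\<dots> = - \<tau> (A k) (B k)" by (simp add: Ak lin_neg[OF linear_left])
  finally have "(\<Sum>l\<in>I - {k}. \<tau> (A l) (B' l)) = (\<Sum>l\<in>I - {k}. \<tau> (A l) (B l)) + \<tau> (A k) (B k)"
    unfolding B'_def by (simp add: lin_diff[OF linear_right] sum_subtractf)
  also have "\<dots> = y"
    unfolding rep using sum.remove[OF finite_index k(1), of "\<lambda>l. \<tau> (A l) (B l)"]
    by (simp add: add.commute)
  finally show False using no_shorter_rep[OF k(1), of B'] by simp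
qed

lemma swap_sides: "minimal_tensor_rep sH s2 (\<lambda>a b. \<tau> b a) y I B A"
proof
  show "bilinear_map sH s2 (\<lambda>a b. \<tau> b a)"
    using bilinear by (simp add: bilinear_map_def)
  show "card I \<le> card J" if "finite J" "y = (\<Sum>i\<in>J. \<tau> (B' i) (A' i))" for J :: "nat set" and A' B'
    using minimal[of J B' A'] that by simp
qed (use finite_index rep in simp_all)

end

lemma independent_dual_functional:
  fixes sH :: "'k::field \<Rightarrow> 'h::ab_group_add \<Rightarrow> 'h"
  assumes "vector_space sH" and "inj_on A I" and "\<not> module.dependent sH (A ` I)" and "j \<in> I"
  shows "\<exists>\<phi>. Vector_Spaces.linear sH (*) \<phi> \<and> (\<forall>i\<in>I. \<phi> (A i) = (if i = j then 1 else 0))"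
proof -
  interpret vector_space_pair sH "(*) :: 'k \<Rightarrow> 'k \<Rightarrow> 'k"
    by (rule vector_space_pairI[OF assms(1) vector_space_field])
  obtain \<phi> where "Vector_Spaces.linear sH (*) \<phi>" "\<forall>v\<in>A ` I. \<phi> v = (if v = A j then 1 else 0)"
    using linear_independent_extend[OF assms(3), of "\<lambda>v. if v = A j then 1 else 0"] by blast
  then show ?thesis
    using assms(2,4) by (intro exI[of _ \<phi>]) (auto simp: inj_on_eq_iff)
qed

lemma rinv_unique: "x * y = 1 \<Longrightarrow> y * x = 1 \<Longrightarrow> rinv x = (y::'a::ring_1)"
proof (unfold rinv_def, rule the_equality)
  fix z assume "x * y = 1" "y * x = 1" "x * z = 1 \<and> z * x = 1"
  then show "z = y" by (metis mult.assoc mult_1_left)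
qed simp_all

lemma commute_inverse:
  fixes x c c' :: "'a::ring_1"
  assumes "x * c = c * x" and "c * c' = 1" and "c' * c = 1"
  shows "x * c' = c' * x"
proof -
  have "c' * x = c' * x * (c * c')" using assms by simp
  also have "\<dots> = c' * (x * c) * c'" by (simp add: mult.assoc)
  also have "\<dots> = x * c'" using assms by (simp add: mult.assoc[symmetric])
  finally show ?thesis by simp
qed

lemma sum_scale_delta:
  assumes "module s" "finite I" "j \<in> I"
  shows "(\<Sum>i\<in>I. s (if i = j then 1 else 0) (X i)) = X j"
proof -
  have "s (if i = j then 1 else 0) (X i) = (if i = j then X i else 0)" for i
    using assms(1) by (simp add: module.scale_one module.scale_zero_left)
  then show ?thesis using assms(2,3) by (simp add: sum.delta)
qed

locale hopf =
  fixes sH :: "'k::field \<Rightarrow> 'h::ring_1 \<Rightarrow> 'h"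
    and s2 :: "'k \<Rightarrow> 'hh::ring_1 \<Rightarrow> 'hh" and t2 :: "'h \<Rightarrow> 'h \<Rightarrow> 'hh"
    and s3 :: "'k \<Rightarrow> 'hhh::ring_1 \<Rightarrow> 'hhh" and t3 :: "'h \<Rightarrow> 'h \<Rightarrow> 'h \<Rightarrow> 'hhh"
    and \<Delta> :: "'h \<Rightarrow> 'hh" and \<epsilon> :: "'h \<Rightarrow> 'k" and S :: "'h \<Rightarrow> 'h"
  assumes hopf_algebra: "hopf_algebra sH s2 t2 s3 t3 \<Delta> \<epsilon> S"
begin

lemma
  shows tensor2: "is_tensor2 sH s2 t2" and tensor3: "is_tensor3 sH s3 t3"
    and k_algebra_H: "k_algebra sH" and k_algebra_2: "k_algebra s2"
    and t2_mult: "t2 a b * t2 c d = t2 (a * c) (b * d)" and t2_one: "t2 1 1 = 1"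
    and linear_Delta: "Vector_Spaces.linear sH s2 \<Delta>"
    and Delta_one: "\<Delta> 1 = 1" and Delta_mult: "\<Delta> (x * y) = \<Delta> x * \<Delta> y"
    and linear_eps: "Vector_Spaces.linear sH (*) \<epsilon>"
    and eps_one: "\<epsilon> 1 = 1" and eps_mult: "\<epsilon> (x * y) = \<epsilon> x * \<epsilon> y"
    and coassoc: "delta_id s2 s3 t2 t3 \<Delta> (\<Delta> h) = id_delta s2 s3 t2 t3 \<Delta> (\<Delta> h)"
    and counit_left: "lift2 s2 sH t2 (\<lambda>a b. sH (\<epsilon> a) b) (\<Delta> h) = h"
    and counit_right: "lift2 s2 sH t2 (\<lambda>a b. sH (\<epsilon> b) a) (\<Delta> h) = h"
    and linear_S: "Vector_Spaces.linear sH sH S"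
    and antipode_left: "lift2 s2 sH t2 (\<lambda>a b. S a * b) (\<Delta> h) = sH (\<epsilon> h) 1"
    and antipode_right: "lift2 s2 sH t2 (\<lambda>a b. a * S b) (\<Delta> h) = sH (\<epsilon> h) 1"
  using hopf_algebra unfolding hopf_algebra_def tensor_algebra2_def tensor_algebra3_def by blast+

lemma
  shows vs_H: "vector_space sH" and vs_2: "vector_space s2" and vs_3: "vector_space s3"
    and bilinear_t2: "bilinear_map sH s2 t2" and trilinear_t3: "trilinear_map sH s3 t3"
    and span_t2: "module.span s2 (range (case_prod t2)) = UNIV"
  using k_algebra_H tensor2 tensor3 unfolding k_algebra_def is_tensor2_def is_tensor3_def by blast+

lemma sH_mult_left: "sH c x * y = sH c (x * y)" and sH_mult_right: "x * sH c y = sH c (x * y)"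
  using k_algebra_H unfolding k_algebra_def by metis+

lemma s2_mult_left: "s2 c z * w = s2 c (z * w)" and s2_mult_right: "z * s2 c w = s2 c (z * w)"
  using k_algebra_2 unfolding k_algebra_def by metis+

lemma linear_t2_left: "Vector_Spaces.linear sH s2 (\<lambda>x. t2 x b)"
  and linear_t2_right: "Vector_Spaces.linear sH s2 (t2 a)"
  using bilinear_t2 by (simp_all add: bilinear_map_def)

lemma linear_t3_1: "Vector_Spaces.linear sH s3 (\<lambda>x. t3 x b c)"
  and linear_t3_2: "Vector_Spaces.linear sH s3 (\<lambda>x. t3 a x c)"
  and linear_t3_3: "Vector_Spaces.linear sH s3 (t3 a b)"
  using trilinear_t3 by (simp_all add: trilinear_map_def)

lemmas t2_add_left = lin_add[OF linear_t2_left] and t2_add_right = lin_add[OF linear_t2_right]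
  and t2_scale_left = lin_scale[OF linear_t2_left] and t2_scale_right = lin_scale[OF linear_t2_right]
  and t2_sum_left = lin_sum[OF linear_t2_left] and t2_sum_right = lin_sum[OF linear_t2_right]
  and t2_diff_left = lin_diff[OF linear_t2_left] and t2_diff_right = lin_diff[OF linear_t2_right]
  and t3_add = lin_add[OF linear_t3_1] lin_add[OF linear_t3_2] lin_add[OF linear_t3_3]
  and t3_scale = lin_scale[OF linear_t3_1] lin_scale[OF linear_t3_2] lin_scale[OF linear_t3_3]
  and t3_sum = lin_sum[OF linear_t3_1] lin_sum[OF linear_t3_2] lin_sum[OF linear_t3_3]
  and S_add = lin_add[OF linear_S] and S_scale = lin_scale[OF linear_S]
  and S_sum = lin_sum[OF linear_S]
  and Delta_add = lin_add[OF linear_Delta] and Delta_scale = lin_scale[OF linear_Delta]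
  and Delta_sum = lin_sum[OF linear_Delta]
  and eps_add = lin_add[OF linear_eps] and eps_scale = lin_scale[OF linear_eps]
  and eps_sum = lin_sum[OF linear_eps]

lemma module_H: "module sH" and module_2: "module s2" and module_3: "module s3"
  using vs_H vs_2 vs_3 by (simp_all add: module_iff_vector_space)

lemmas scale_simps = module.scale_right_distrib module.scale_left_distrib module.scale_scale
  module.scale_one module.scale_sum_right module.scale_zero_left module.scale_zero_right

lemmas linear_simps = sH_mult_left sH_mult_right s2_mult_left s2_mult_right
  t2_add_left t2_add_right t2_scale_left t2_scale_right t3_add t3_scale
  S_add S_scale Delta_add Delta_scale eps_add eps_scale distrib_left distrib_right
  scale_simps[OF module_H] scale_simps[OF module_2] scale_simps[OF module_3]

lemmas multilinear_simps = linear_simps sum.distrib t3_sum t2_sum_left t2_sum_right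

lemma tensor_rep_exists: "\<exists>(n::nat) A B. y = (\<Sum>i<n. t2 (A i) (B i))"
proof -
  interpret M: vector_space s2 by (rule vs_2)
  have "y \<in> M.span (range (case_prod t2))" using span_t2 by simp
  then obtain T u where T: "finite T" "T \<subseteq> range (case_prod t2)" "y = (\<Sum>v\<in>T. s2 (u v) v)"
    unfolding M.span_explicit by blast
  obtain xs where xs: "set xs = T" "distinct xs" using finite_distinct_list[OF T(1)] by blast
  have "\<exists>a b. v = t2 a b" if v: "v \<in> T" for v
  proof -
    obtain q where "v = case_prod t2 q" using T(2) v by blast
    then show ?thesis by (cases q) auto
  qed
  then obtain a b where ab: "\<And>v. v \<in> T \<Longrightarrow> v = t2 (a v) (b v)" by metis
  have "y = (\<Sum>i<length xs. s2 (u (xs ! i)) (xs ! i))"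
    using T(3) by (simp add: xs(1)[symmetric] sum.distinct_set_conv_list[OF xs(2)]
      sum_list_sum_nth atLeast0LessThan)
  also have "\<dots> = (\<Sum>i<length xs. t2 (sH (u (xs ! i)) (a (xs ! i))) (b (xs ! i)))"
    using ab xs(1) by (intro sum.cong refl) (metis nth_mem lessThan_iff t2_scale_left)
  finally show ?thesis by (intro exI) assumption
qed

definition tensor_rep :: "'hh \<Rightarrow> nat \<times> (nat \<Rightarrow> 'h) \<times> (nat \<Rightarrow> 'h)" where
  "tensor_rep y = (SOME (n, A, B). y = (\<Sum>i<n. t2 (A i) (B i)))"

definition rep_len :: "'hh \<Rightarrow> nat" where "rep_len y = fst (tensor_rep y)"
definition rep_left :: "'hh \<Rightarrow> nat \<Rightarrow> 'h" where "rep_left y = fst (snd (tensor_rep y))"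
definition rep_right :: "'hh \<Rightarrow> nat \<Rightarrow> 'h" where "rep_right y = snd (snd (tensor_rep y))"

lemma tensor_rep: "y = (\<Sum>i<rep_len y. t2 (rep_left y i) (rep_right y i))"
proof -
  obtain n :: nat and A B where "y = (\<Sum>i<n. t2 (A i) (B i))" using tensor_rep_exists[of y] by blast
  then have "\<exists>r. (\<lambda>(n, A, B). y = (\<Sum>i<(n::nat). t2 (A i) (B i))) r" by (intro exI[of _ "(n, A, B)"]) simp
  then have "(\<lambda>(n, A, B). y = (\<Sum>i<(n::nat). t2 (A i) (B i))) (tensor_rep y)"
    unfolding tensor_rep_def by (rule someI_ex)
  then show ?thesis unfolding rep_len_def rep_left_def rep_right_def by (simp add: split_beta)
qed

text \<open>The Sweedler sum \<open>y\<^sub>1 \<otimes> y\<^sub>2 \<mapsto> f y\<^sub>1 y\<^sub>2\<close>, evaluated on one fixed representation of \<open>y\<close>.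
  For bilinear \<open>f\<close> it is \<open>lift2\<close>; its formal rules (pulling out factors, exchanging
  nested sums) hold for arbitrary \<open>f\<close>.\<close>

definition sweedler :: "('h \<Rightarrow> 'h \<Rightarrow> 'v) \<Rightarrow> 'hh \<Rightarrow> 'v::ab_group_add" where
  "sweedler f y = (\<Sum>i<rep_len y. f (rep_left y i) (rep_right y i))"

lemma lift2_linear: "vector_space sV \<Longrightarrow> bilinear_map sH sV f \<Longrightarrow> Vector_Spaces.linear s2 sV (lift2 s2 sV t2 f)"
  and lift2_t2: "vector_space sV \<Longrightarrow> bilinear_map sH sV f \<Longrightarrow> lift2 s2 sV t2 f (t2 a b) = f a b"
  by (simp_all add: tensor2_lift[OF tensor2])

lemma lift3_linear: "vector_space sV \<Longrightarrow> trilinear_map sH sV f \<Longrightarrow> Vector_Spaces.linear s3 sV (lift3 s3 sV t3 f)"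
  and lift3_t3: "vector_space sV \<Longrightarrow> trilinear_map sH sV f \<Longrightarrow> lift3 s3 sV t3 f (t3 a b c) = f a b c"
  by (simp_all add: tensor3_lift[OF tensor3])

lemma lift2_rep:
  assumes "vector_space sV" "bilinear_map sH sV f" "y = (\<Sum>i\<in>I. t2 (A i) (B i))"
  shows "lift2 s2 sV t2 f y = (\<Sum>i\<in>I. f (A i) (B i))"
  using assms by (simp add: lin_sum[OF lift2_linear] lift2_t2)

lemma lift2_eq_sweedler: "vector_space sV \<Longrightarrow> bilinear_map sH sV f \<Longrightarrow> lift2 s2 sV t2 f y = sweedler f y"
  unfolding sweedler_def by (rule lift2_rep[OF _ _ tensor_rep])

lemma sweedler_rep:
  "vector_space sV \<Longrightarrow> bilinear_map sH sV f \<Longrightarrow> y = (\<Sum>i\<in>I. t2 (A i) (B i)) \<Longrightarrow> sweedler f y = (\<Sum>i\<in>I. f (A i) (B i))"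
  using lift2_rep lift2_eq_sweedler by metis

lemma sweedler_t2: "vector_space sV \<Longrightarrow> bilinear_map sH sV f \<Longrightarrow> sweedler f (t2 a b) = f a b"
  using lift2_eq_sweedler lift2_t2 by metis

lemma sweedler_one: "vector_space sV \<Longrightarrow> bilinear_map sH sV f \<Longrightarrow> sweedler f 1 = f 1 1"
  using sweedler_t2 t2_one by metis

lemma sweedler_tensor: "sweedler t2 y = y"
  unfolding sweedler_def by (rule tensor_rep[symmetric])

lemma linear_sweedler: "vector_space sV \<Longrightarrow> bilinear_map sH sV f \<Longrightarrow> Vector_Spaces.linear s2 sV (sweedler f)"
  using lift2_linear lift2_eq_sweedler by (metis ext)

lemma linear_sweedler_comp:
  "vector_space sV \<Longrightarrow> bilinear_map sH sV f \<Longrightarrow> Vector_Spaces.linear sH s2 g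
    \<Longrightarrow> Vector_Spaces.linear sH sV (\<lambda>x. sweedler f (g x))"
  by (rule lin_comp[OF _ linear_sweedler])

lemma linear_sweedler_param:
  "vector_space sV \<Longrightarrow> vector_space sW \<Longrightarrow> (\<And>a b. Vector_Spaces.linear sW sV (\<lambda>z. f z a b))
    \<Longrightarrow> Vector_Spaces.linear sW sV (\<lambda>z. sweedler (f z) y)"
  unfolding sweedler_def
  by (rule vector_space_pair.linear_compose_sum[OF vector_space_pairI]) auto

lemma sweedler_linear_image: "Vector_Spaces.linear sV sW L \<Longrightarrow> L (sweedler f y) = sweedler (\<lambda>a b. L (f a b)) y"
  unfolding sweedler_def by (rule lin_sum)

lemma sweedler_add: "sweedler (\<lambda>a b. f a b + g a b) y = sweedler f y + sweedler g y"
  and sweedler_diff: "sweedler (\<lambda>a b. f a b - g a b) y = sweedler f y - sweedler g y"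
  and sweedler_sum: "sweedler (\<lambda>a b. \<Sum>i\<in>I. F i a b) y = (\<Sum>i\<in>I. sweedler (F i) y)"
  and sweedler_swap: "sweedler (\<lambda>a b. sweedler (\<lambda>c d. G a b c d) z) y = sweedler (\<lambda>c d. sweedler (\<lambda>a b. G a b c d) y) z"
  unfolding sweedler_def by (simp_all add: sum.distrib sum_subtractf) (rule sum.swap)+

lemma sweedler_mult_left: "(x::'r::ring) * sweedler f y = sweedler (\<lambda>a b. x * f a b) y"
  and sweedler_mult_right: "sweedler f y * (x::'r::ring) = sweedler (\<lambda>a b. f a b * x) y"
  and sweedler_sandwich: "sweedler (\<lambda>a b. P * f a b * (Q::'r::ring)) y = P * sweedler f y * Q"
  unfolding sweedler_def by (simp_all add: sum_distrib_left sum_distrib_right)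

lemma sweedler_scale_H: "sweedler (\<lambda>a b. sH c (f a b)) y = sH c (sweedler f y)"
  and sweedler_scale_2: "sweedler (\<lambda>a b. s2 c (g a b)) y = s2 c (sweedler g y)"
  and sweedler_scale_k: "sweedler (\<lambda>a b. (c::'k) * (e a b)) y = c * (sweedler e y)"
  unfolding sweedler_def by (simp_all add: scale_simps[OF module_H] scale_simps[OF module_2] sum_distrib_left)

lemmas sweedler_simps = sweedler_add sweedler_diff sweedler_scale_H sweedler_scale_2 sweedler_scale_k

lemma sweedler_mult:
  assumes "vector_space sV" "bilinear_map sH sV f"
  shows "sweedler (\<lambda>c d. sweedler (\<lambda>c' d'. f (c * c') (d * d')) z') z = sweedler f (z * z')"
proof -
  have "z * z' = (\<Sum>i<rep_len z. \<Sum>j<rep_len z'. t2 (rep_left z i * rep_left z' j) (rep_right z i * rep_right z' j))"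
    by (subst (1 2) tensor_rep) (simp add: sum_distrib_left sum_distrib_right t2_mult sum.swap[of _ "{..<rep_len z}"])
  then show ?thesis
    unfolding sweedler_def[of _ z] sweedler_def[of _ z'] using assms
    by (simp add: lin_sum[OF linear_sweedler] sweedler_t2)
qed

lemma bilinear_counit_left: "bilinear_map sH sH (\<lambda>a b. sH (\<epsilon> a) b)"
  and bilinear_counit_right: "bilinear_map sH sH (\<lambda>a b. sH (\<epsilon> b) a)"
  and bilinear_antipode_left: "bilinear_map sH sH (\<lambda>a b. S a * b)"
  and bilinear_antipode_right: "bilinear_map sH sH (\<lambda>a b. a * S b)"
  by (rule bilinear_mapI; rule linearI[OF vs_H vs_H]; simp add: linear_simps mult.commute)+

lemma counit_left_sweedler: "sweedler (\<lambda>a b. sH (\<epsilon> a) b) (\<Delta> h) = h"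
  and counit_right_sweedler: "sweedler (\<lambda>a b. sH (\<epsilon> b) a) (\<Delta> h) = h"
  and antipode_left_sweedler: "sweedler (\<lambda>a b. S a * b) (\<Delta> h) = sH (\<epsilon> h) 1"
  and antipode_right_sweedler: "sweedler (\<lambda>a b. a * S b) (\<Delta> h) = sH (\<epsilon> h) 1"
  by (simp_all add: lift2_eq_sweedler[OF vs_H, symmetric] bilinear_counit_left bilinear_counit_right
    bilinear_antipode_left bilinear_antipode_right counit_left counit_right antipode_left antipode_right)

lemma counit_left_linear:
  "Vector_Spaces.linear sH sV L \<Longrightarrow> sweedler (\<lambda>a b. L (sH (\<epsilon> a) b)) (\<Delta> h) = L h"
  using sweedler_linear_image[of sH sV L "\<lambda>a b. sH (\<epsilon> a) b" "\<Delta> h"] by (simp add: counit_left_sweedler)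

lemma counit_right_linear:
  "Vector_Spaces.linear sH sV L \<Longrightarrow> sweedler (\<lambda>a b. L (sH (\<epsilon> b) a)) (\<Delta> h) = L h"
  using sweedler_linear_image[of sH sV L "\<lambda>a b. sH (\<epsilon> b) a" "\<Delta> h"] by (simp add: counit_right_sweedler)

lemma bilinear_sweedler_Delta_left:
  assumes "vector_space sV" "\<And>b. bilinear_map sH sV (\<lambda>c d. G c d b)" "\<And>c d. Vector_Spaces.linear sH sV (G c d)"
  shows "bilinear_map sH sV (\<lambda>a b. sweedler (\<lambda>c d. G c d b) (\<Delta> a))"
  by (rule bilinear_mapI) (rule linear_sweedler_param linear_sweedler_comp linear_Delta vs_H assms)+

lemma bilinear_sweedler_Delta_right:
  assumes "vector_space sV" "\<And>a. bilinear_map sH sV (G a)" "\<And>c d. Vector_Spaces.linear sH sV (\<lambda>a. G a c d)"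
  shows "bilinear_map sH sV (\<lambda>a b. sweedler (G a) (\<Delta> b))"
  by (rule bilinear_mapI) (rule linear_sweedler_param linear_sweedler_comp linear_Delta vs_H assms)+

lemma bilinear_t3_12: "bilinear_map sH s3 (\<lambda>c d. t3 c d b)"
  and bilinear_t3_23: "bilinear_map sH s3 (\<lambda>c d. t3 a c d)"
  by (rule bilinear_mapI; rule linearI[OF vs_H vs_3]; simp add: linear_simps)+

lemma delta_id_sweedler: "delta_id s2 s3 t2 t3 \<Delta> (\<Delta> h) = sweedler (\<lambda>a b. sweedler (\<lambda>c d. t3 c d b) (\<Delta> a)) (\<Delta> h)"
  unfolding delta_id_def
  by (simp add: lift2_eq_sweedler[OF vs_3] bilinear_t3_12 bilinear_sweedler_Delta_left[OF vs_3 bilinear_t3_12 linear_t3_3])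

lemma id_delta_sweedler: "id_delta s2 s3 t2 t3 \<Delta> (\<Delta> h) = sweedler (\<lambda>a b. sweedler (\<lambda>c d. t3 a c d) (\<Delta> b)) (\<Delta> h)"
  unfolding id_delta_def
  by (simp add: lift2_eq_sweedler[OF vs_3] bilinear_t3_23 bilinear_sweedler_Delta_right[OF vs_3 bilinear_t3_23 linear_t3_1])

lemma coassoc_sweedler:
  assumes V: "vector_space sV" and F: "trilinear_map sH sV F"
  shows "sweedler (\<lambda>a b. sweedler (\<lambda>c d. F c d b) (\<Delta> a)) (\<Delta> h) = sweedler (\<lambda>a b. sweedler (\<lambda>c d. F a c d) (\<Delta> b)) (\<Delta> h)"
proof -
  have "lift3 s3 sV t3 F (delta_id s2 s3 t2 t3 \<Delta> (\<Delta> h)) = lift3 s3 sV t3 F (id_delta s2 s3 t2 t3 \<Delta> (\<Delta> h))"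
    by (simp add: coassoc)
  then show ?thesis
    unfolding delta_id_sweedler id_delta_sweedler sweedler_linear_image[OF lift3_linear[OF V F]] lift3_t3[OF V F] .
qed

lemma S_one: "S 1 = 1"
  using antipode_left_sweedler[of 1]
  by (simp add: Delta_one sweedler_one[OF vs_H bilinear_antipode_left] eps_one scale_simps[OF module_H])

lemma eps_S: "\<epsilon> (S h) = \<epsilon> h"
proof -
  have "sweedler (\<lambda>a b. \<epsilon> (S a) * \<epsilon> b) (\<Delta> h) = \<epsilon> h"
    using arg_cong[OF antipode_left_sweedler, of \<epsilon> h]
    by (simp add: sweedler_linear_image[OF linear_eps] eps_mult eps_scale eps_one)
  moreover have "sweedler (\<lambda>a b. \<epsilon> b * \<epsilon> (S a)) (\<Delta> h) = \<epsilon> (S h)"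
    using counit_right_linear[OF lin_comp[OF linear_S linear_eps], of h] by (simp add: S_scale eps_scale)
  ultimately show ?thesis by (simp add: mult.commute)
qed

text \<open>\<open>S(xy)\<close> and \<open>S(y)S(x)\<close> are the two bracketings, allowed by coassociativity, of
  \<open>S(x\<^sub>1y\<^sub>1) x\<^sub>2y\<^sub>2 S(y\<^sub>3) S(x\<^sub>3)\<close>.\<close>

lemma S_mult_id_Delta:
  "sweedler (\<lambda>a b. sweedler (\<lambda>c d. sweedler (\<lambda>a' b'. sweedler (\<lambda>c' d'.
      S (a * a') * (c * c') * S d' * S d) (\<Delta> b')) (\<Delta> y)) (\<Delta> b)) (\<Delta> x) = S (x * y)"
proof -
  have inner: "sweedler (\<lambda>c' d'. S (a * a') * (c * c') * S d' * S d) (\<Delta> b') = sH (\<epsilon> b') (S (a * a') * c * S d)"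
    for a c d a' b'
    using sweedler_sandwich[of "S (a * a') * c" "\<lambda>c' d'. c' * S d'" "S d" "\<Delta> b'"]
    by (simp add: mult.assoc antipode_right_sweedler linear_simps)
  have lin: "Vector_Spaces.linear sH sH (\<lambda>z. S (a * z) * c * S d)" "Vector_Spaces.linear sH sH (\<lambda>z. S (z * y))" for a c d
    by (rule linearI[OF vs_H vs_H]; simp add: linear_simps)+
  have "sweedler (\<lambda>a' b'. sH (\<epsilon> b') (S (a * a') * c * S d)) (\<Delta> y) = S (a * y) * c * S d" for a c d
    using counit_right_linear[OF lin(1), of a c d y] by (simp add: linear_simps)
  moreover have "sweedler (\<lambda>c d. S (a * y) * c * S d) (\<Delta> b) = sH (\<epsilon> b) (S (a * y))" for a b
    using sweedler_sandwich[of "S (a * y)" "\<lambda>c d. c * S d" 1 "\<Delta> b"]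
    by (simp add: mult.assoc antipode_right_sweedler linear_simps)
  ultimately show ?thesis
    using counit_right_linear[OF lin(2), of x] by (simp add: inner linear_simps)
qed

lemma S_mult_Delta_id:
  "sweedler (\<lambda>a b. sweedler (\<lambda>c d. sweedler (\<lambda>a' b'. sweedler (\<lambda>c' d'.
      S (c * c') * (d * d') * S b' * S b) (\<Delta> a')) (\<Delta> y)) (\<Delta> a)) (\<Delta> x) = S y * S x"
proof -
  have lin: "Vector_Spaces.linear sH sH (\<lambda>z. S z * S b)" "Vector_Spaces.linear sH sH (\<lambda>z. S y * S z)" for b
    by (rule linearI[OF vs_H vs_H]; simp add: linear_simps)+
  have "sweedler (\<lambda>c d. sweedler (\<lambda>a' b'. sweedler (\<lambda>c' d'.
      S (c * c') * (d * d') * S b' * S b) (\<Delta> a')) (\<Delta> y)) (\<Delta> a)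
    = sweedler (\<lambda>a' b'. sweedler (\<lambda>c d. sweedler (\<lambda>c' d'.
      S (c * c') * (d * d')) (\<Delta> a')) (\<Delta> a) * (S b' * S b)) (\<Delta> y)" for a b
    by (subst sweedler_swap) (simp add: sweedler_mult_right mult.assoc)
  also have "\<dots> a b = sH (\<epsilon> a) (sweedler (\<lambda>a' b'. S (sH (\<epsilon> a') b') * S b) (\<Delta> y))" for a b
    by (simp add: sweedler_mult[OF vs_H bilinear_antipode_left] Delta_mult[symmetric] antipode_left_sweedler
      eps_mult sweedler_scale_H[symmetric] linear_simps)
  also have "\<dots> a b = sH (\<epsilon> a) (S y * S b)" for a b
    by (simp only: counit_left_linear[OF lin(1)])
  finally show ?thesis
    using counit_left_linear[OF lin(2), of x] by (simp add: linear_simps)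
qed

lemma S_mult: "S (x * y) = S y * S x"
proof -
  define T where "T a c d a' c' d' = S (a * a') * (c * c') * S d' * S d" for a c d a' c' d'
  have tri: "trilinear_map sH sH (\<lambda>a c d. sweedler (\<lambda>a' b'. sweedler (\<lambda>c' d'. T a c d c' d' b') (\<Delta> a')) (\<Delta> y))"
    unfolding T_def
    by (rule trilinear_mapI; rule linearI[OF vs_H vs_H]) (simp_all add: linear_simps sweedler_simps eps_mult)
  have coassoc_y: "sweedler (\<lambda>a' b'. sweedler (\<lambda>c' d'. T a c d c' d' b') (\<Delta> a')) (\<Delta> y)
      = sweedler (\<lambda>a' b'. sweedler (\<lambda>c' d'. T a c d a' c' d') (\<Delta> b')) (\<Delta> y)" for a c d
    unfolding T_def
    by (rule coassoc_sweedler[OF vs_H]) (rule trilinear_mapI; rule linearI[OF vs_H vs_H]; simp add: linear_simps)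
  have "S (x * y) = sweedler (\<lambda>a b. sweedler (\<lambda>c d. sweedler (\<lambda>a' b'.
      sweedler (\<lambda>c' d'. T a c d a' c' d') (\<Delta> b')) (\<Delta> y)) (\<Delta> b)) (\<Delta> x)"
    unfolding T_def by (rule S_mult_id_Delta[symmetric])
  also have "\<dots> = sweedler (\<lambda>a b. sweedler (\<lambda>c d. sweedler (\<lambda>a' b'.
      sweedler (\<lambda>c' d'. T a c d c' d' b') (\<Delta> a')) (\<Delta> y)) (\<Delta> b)) (\<Delta> x)"
    by (simp only: coassoc_y)
  also have "\<dots> = sweedler (\<lambda>a b. sweedler (\<lambda>c d. sweedler (\<lambda>a' b'.
      sweedler (\<lambda>c' d'. T c d b c' d' b') (\<Delta> a')) (\<Delta> y)) (\<Delta> a)) (\<Delta> x)"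
    by (rule coassoc_sweedler[OF vs_H tri, symmetric])
  also have "\<dots> = S y * S x"
    unfolding T_def by (rule S_mult_Delta_id)
  finally show ?thesis .
qed

definition flip :: "'hh \<Rightarrow> 'hh" where
  "flip y = sweedler (\<lambda>a b. t2 b a) y"

definition S_tensor :: "'hh \<Rightarrow> 'hh" where
  "S_tensor y = sweedler (\<lambda>a b. t2 (S a) (S b)) y"

lemma bilinear_flip: "bilinear_map sH s2 (\<lambda>a b. t2 b a)"
  and bilinear_S_tensor: "bilinear_map sH s2 (\<lambda>a b. t2 (S a) (S b))"
  and bilinear_S_tensor_flip: "bilinear_map sH s2 (\<lambda>a b. t2 (S b) (S a))"
  by (rule bilinear_mapI; rule linearI[OF vs_H vs_2]; simp add: linear_simps)+

lemma linear_flip: "Vector_Spaces.linear s2 s2 flip"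
  and linear_S_tensor: "Vector_Spaces.linear s2 s2 S_tensor"
  unfolding flip_def[abs_def] S_tensor_def[abs_def]
  by (rule linear_sweedler[OF vs_2 bilinear_flip] linear_sweedler[OF vs_2 bilinear_S_tensor])+

lemma flip_t2: "flip (t2 a b) = t2 b a"
  and S_tensor_t2: "S_tensor (t2 a b) = t2 (S a) (S b)"
  unfolding flip_def S_tensor_def
  by (rule sweedler_t2[OF vs_2 bilinear_flip] sweedler_t2[OF vs_2 bilinear_S_tensor])+

lemma flip_one: "flip 1 = 1"
  by (metis flip_t2 t2_one)

lemma S_tensor_one: "S_tensor 1 = 1"
  by (metis S_tensor_t2 S_one t2_one)

lemma sweedler_flip:
  assumes "vector_space sV" "bilinear_map sH sV f"
  shows "sweedler f (flip y) = sweedler (\<lambda>a b. f b a) y"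
  unfolding flip_def sweedler_def[of _ y] by (rule sweedler_rep[OF assms]) simp

lemma sweedler_S_tensor:
  assumes "vector_space sV" "bilinear_map sH sV f"
  shows "sweedler f (S_tensor y) = sweedler (\<lambda>a b. f (S a) (S b)) y"
  unfolding S_tensor_def sweedler_def[of _ y] by (rule sweedler_rep[OF assms]) simp

lemma flip_flip: "flip (flip y) = y"
  unfolding flip_def[of "flip y"] sweedler_flip[OF vs_2 bilinear_flip] by (simp add: sweedler_tensor)

lemma flip_mult: "flip (y * z) = flip y * flip z"
  unfolding flip_def
  by (simp only: sweedler_mult[OF vs_2 bilinear_flip, symmetric] sweedler_mult_right, simp only: sweedler_mult_left t2_mult)

lemma S_tensor_mult: "S_tensor (y * z) = S_tensor z * S_tensor y"
  unfolding S_tensor_def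
  by (simp add: sweedler_mult[OF vs_2 bilinear_S_tensor, symmetric] sweedler_mult_left sweedler_mult_right t2_mult S_mult)

lemma S_tensor_flip: "S_tensor (flip y) = flip (S_tensor y)"
  unfolding S_tensor_def[of "flip y"] sweedler_flip[OF vs_2 bilinear_S_tensor]
  unfolding S_tensor_def sweedler_linear_image[OF linear_flip] flip_t2 ..

definition S_Delta_op :: "'h \<Rightarrow> 'hh" where
  "S_Delta_op h = sweedler (\<lambda>a b. t2 (S b) (S a)) (\<Delta> h)"

lemma linear_S_Delta_op: "Vector_Spaces.linear sH s2 S_Delta_op"
  unfolding S_Delta_op_def[abs_def] by (rule linear_sweedler_comp[OF vs_2 bilinear_S_tensor_flip linear_Delta])

lemma S_Delta_op_eq: "S_Delta_op h = S_tensor (flip (\<Delta> h))"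
  unfolding S_Delta_op_def S_tensor_def sweedler_flip[OF vs_2 bilinear_S_tensor] ..

lemma Delta_mult_t2_antipode: "sweedler (\<lambda>c d. \<Delta> c * t2 e (S d)) (\<Delta> a) = t2 (a * e) 1"
proof -
  have tri: "trilinear_map sH s2 (\<lambda>p q d. t2 (p * e) (q * S d))"
    by (rule trilinear_mapI; rule linearI[OF vs_H vs_2]; simp add: linear_simps)
  have lin: "Vector_Spaces.linear sH s2 (\<lambda>z. t2 (z * e) 1)"
    by (rule linearI[OF vs_H vs_2]; simp add: linear_simps)
  have "\<Delta> c * t2 e (S d) = sweedler (\<lambda>p q. t2 (p * e) (q * S d)) (\<Delta> c)" for c d
    using sweedler_mult_right[of t2 "\<Delta> c" "t2 e (S d)"] by (simp add: sweedler_tensor t2_mult)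
  then have "sweedler (\<lambda>c d. \<Delta> c * t2 e (S d)) (\<Delta> a)
      = sweedler (\<lambda>c d. sweedler (\<lambda>p q. t2 (p * e) (q * S d)) (\<Delta> c)) (\<Delta> a)"
    by simp
  also have "\<dots> = sweedler (\<lambda>c d. sweedler (\<lambda>p q. t2 (c * e) (p * S q)) (\<Delta> d)) (\<Delta> a)"
    by (rule coassoc_sweedler[OF vs_2 tri])
  also have "\<dots> = sweedler (\<lambda>c d. t2 (sH (\<epsilon> d) c * e) 1) (\<Delta> a)"
    by (simp add: sweedler_linear_image[OF linear_t2_right, symmetric] antipode_right_sweedler linear_simps)
  also have "\<dots> = t2 (a * e) 1"
    using counit_right_linear[OF lin, of a] by (simp add: linear_simps)
  finally show ?thesis .
qed

lemma Delta_S_Delta_op_inverse: "sweedler (\<lambda>a b. \<Delta> a * S_Delta_op b) (\<Delta> h) = s2 (\<epsilon> h) 1"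
proof -
  have "sweedler (\<lambda>a b. \<Delta> a * S_Delta_op b) (\<Delta> h)
      = sweedler (\<lambda>a b. sweedler (\<lambda>c d. \<Delta> c * t2 (S b) (S d)) (\<Delta> a)) (\<Delta> h)"
    unfolding S_Delta_op_def sweedler_mult_left
    by (rule coassoc_sweedler[OF vs_2, of "\<lambda>p q r. \<Delta> p * t2 (S r) (S q)", symmetric])
      (rule trilinear_mapI; rule linearI[OF vs_H vs_2]; simp add: linear_simps)
  also have "\<dots> = s2 (\<epsilon> h) 1"
    by (simp add: Delta_mult_t2_antipode sweedler_linear_image[OF linear_t2_left, symmetric]
      antipode_right_sweedler t2_scale_left t2_one)
  finally show ?thesis .
qed

text \<open>\<open>S_Delta_op\<close> is a right and \<open>\<Delta> \<circ> S\<close> a left convolution inverse of \<open>\<Delta>\<close>, so they coincide.\<close>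

lemma Delta_S: "\<Delta> (S h) = S_Delta_op h"
proof -
  have "trilinear_map sH s2 (\<lambda>p q r. \<Delta> (S p) * \<Delta> q * S_Delta_op r)"
    by (rule trilinear_mapI; rule linearI[OF vs_H vs_2])
      (simp_all add: linear_simps lin_add[OF linear_S_Delta_op] lin_scale[OF linear_S_Delta_op])
  from coassoc_sweedler[OF vs_2 this, of h]
  have "sweedler (\<lambda>a b. sweedler (\<lambda>c d. \<Delta> (S c) * \<Delta> d) (\<Delta> a) * S_Delta_op b) (\<Delta> h)
      = sweedler (\<lambda>a b. \<Delta> (S a) * sweedler (\<lambda>c d. \<Delta> c * S_Delta_op d) (\<Delta> b)) (\<Delta> h)"
    by (simp add: sweedler_mult_left sweedler_mult_right mult.assoc)
  moreover have "sweedler (\<lambda>c d. \<Delta> (S c) * \<Delta> d) (\<Delta> a) = s2 (\<epsilon> a) 1" for a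
    by (simp add: Delta_mult[symmetric] sweedler_linear_image[OF linear_Delta, symmetric]
      antipode_left_sweedler Delta_scale Delta_one)
  ultimately show ?thesis
    using counit_left_linear[OF linear_S_Delta_op, of h] counit_right_linear[OF lin_comp[OF linear_S linear_Delta], of h]
    by (simp add: Delta_S_Delta_op_inverse linear_simps lin_scale[OF linear_S_Delta_op])
qed

lemma flip_S_Delta_op: "flip (S_Delta_op h) = S_tensor (\<Delta> h)"
  unfolding S_Delta_op_def S_tensor_def sweedler_linear_image[OF linear_flip] flip_t2 ..

lemma lift3_apply:
  assumes "vector_space sV" "trilinear_map sH sV F"
  shows "lift3 s3 sV t3 F (sum g J) = (\<Sum>j\<in>J. lift3 s3 sV t3 F (g j))"
    and "lift3 s3 sV t3 F (sweedler f y) = sweedler (\<lambda>a b. lift3 s3 sV t3 F (f a b)) y"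
    and "lift3 s3 sV t3 F (t3 a b c) = F a b c"
  using lin_sum[OF lift3_linear[OF assms]] sweedler_linear_image[OF lift3_linear[OF assms]] lift3_t3[OF assms]
  by simp_all

lemma t2_one_left_cancel:
  assumes "t2 1 x = t2 1 y" shows "x = y"
proof (rule ccontr)
  interpret M: vector_space s2 by (rule vs_2)
  assume "x \<noteq> y"
  then have "\<not> module.dependent sH {1} \<and> \<not> module.dependent sH {x - y}"
    using vs_H by (simp add: vector_space.dependent_single)
  then have "\<not> M.dependent (case_prod t2 ` ({1} \<times> {x - y}))"
    using tensor2 unfolding is_tensor2_def by blast
  then show False using assms by (simp add: t2_diff_right)
qed

lemma t2_one_right_cancel:
  assumes "t2 x 1 = t2 y 1" shows "x = y"
proof (rule ccontr)
  interpret M: vector_space s2 by (rule vs_2)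
  assume "x \<noteq> y"
  then have "\<not> module.dependent sH {1} \<and> \<not> module.dependent sH {x - y}"
    using vs_H by (simp add: vector_space.dependent_single)
  then have "\<not> M.dependent (case_prod t2 ` ({x - y} \<times> {1}))"
    using tensor2 unfolding is_tensor2_def by blast
  then show False using assms by (simp add: t2_diff_left)
qed

lemma sweedler_t2_left: "sweedler (\<lambda>a b. t2 (f a b) c) y = t2 (sweedler f y) c"
  and sweedler_t2_right: "sweedler (\<lambda>a b. t2 c (f a b)) y = t2 c (sweedler f y)"
  by (simp_all add: sweedler_linear_image[OF linear_t2_left] sweedler_linear_image[OF linear_t2_right])

lemma S_antipode_sweedler: "sweedler (\<lambda>c d. S (S d) * S c) (\<Delta> b) = sH (\<epsilon> b) 1"
  using sweedler_linear_image[OF linear_S, of "\<lambda>c d. c * S d" "\<Delta> b"]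
  by (simp add: S_mult antipode_right_sweedler S_scale S_one)

lemma R21_eq_flip: "R21 s2 t2 y = flip y"
  unfolding R21_def flip_def by (rule lift2_eq_sweedler[OF vs_2 bilinear_flip])

end

locale sqt =
  fixes sH :: "'k::field \<Rightarrow> 'h::ring_1 \<Rightarrow> 'h"
    and s2 :: "'k \<Rightarrow> 'hh::ring_1 \<Rightarrow> 'hh" and t2 :: "'h \<Rightarrow> 'h \<Rightarrow> 'hh"
    and s3 :: "'k \<Rightarrow> 'hhh::ring_1 \<Rightarrow> 'hhh" and t3 :: "'h \<Rightarrow> 'h \<Rightarrow> 'h \<Rightarrow> 'hhh"
    and \<Delta> :: "'h \<Rightarrow> 'hh" and \<epsilon> :: "'h \<Rightarrow> 'k" and S :: "'h \<Rightarrow> 'h" and R :: 'hh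
  assumes semiquasitriangular: "semiquasitriangular sH s2 t2 s3 t3 \<Delta> \<epsilon> S R"

sublocale sqt \<subseteq> hopf
  using semiquasitriangular by unfold_locales (simp add: semiquasitriangular_def)

context sqt
begin

lemma R_invertible: "\<exists>R'. R * R' = 1 \<and> R' * R = 1"
  and axiom1: "lift2 s2 s3 t2 (\<lambda>a b. lift2 s2 s3 t2 (\<lambda>c d. t3 c d b) (\<Delta> a)) R =
    lift2 s2 s3 t2 (\<lambda>a b. lift2 s2 s3 t2 (\<lambda>c d. t3 a c (b * d)) R) R"
  and axiom2: "lift2 s2 s3 t2 (\<lambda>a b. lift2 s2 s3 t2 (\<lambda>c d. t3 a c d) (\<Delta> b)) R =
    lift2 s2 s3 t2 (\<lambda>a b. lift2 s2 s3 t2 (\<lambda>c d. t3 (a * c) d b) R) R"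
  and axiom3: "lift2 s2 s3 t2 (\<lambda>a b. lift2 s2 s3 t2 (\<lambda>b1 b2.
      lift2 s2 s3 t2 (\<lambda>c d. t3 a (b2 * c) (b1 * d)) R) (\<Delta> b)) R =
    lift2 s2 s3 t2 (\<lambda>a b. lift2 s2 s3 t2 (\<lambda>b1 b2.
      lift2 s2 s3 t2 (\<lambda>c d. t3 a (c * b1) (d * b2)) R) (\<Delta> b)) R"
  and axiom4: "lift2 s2 s3 t2 (\<lambda>a b. lift2 s2 s3 t2 (\<lambda>a1 a2.
      lift2 s2 s3 t2 (\<lambda>c d. t3 (a2 * c) (a1 * d) b) R) (\<Delta> a)) R =
    lift2 s2 s3 t2 (\<lambda>a b. lift2 s2 s3 t2 (\<lambda>a1 a2.
      lift2 s2 s3 t2 (\<lambda>c d. t3 (c * a1) (d * a2) b) R) (\<Delta> a)) R"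
  using semiquasitriangular unfolding semiquasitriangular_def by blast+

lemma R_right_cancel:
  assumes "z * R = R" shows "z = 1"
proof -
  obtain R' where "R * R' = 1" using R_invertible by blast
  then show ?thesis using assms by (metis mult.assoc mult_1_right)
qed

lemma rinv_R: "R * rinv R = 1" "rinv R * R = 1"
proof -
  obtain R' where "R * R' = 1" "R' * R = 1" using R_invertible by blast
  then show "R * rinv R = 1" "rinv R * R = 1" using rinv_unique[of R R'] by simp_all
qed

definition quasi_cocommutative :: "'h \<Rightarrow> bool" where
  "quasi_cocommutative x \<longleftrightarrow> flip (\<Delta> x) * R = R * \<Delta> x"

lemma quasi_cocommutative_scale: "quasi_cocommutative x \<Longrightarrow> quasi_cocommutative (sH c x)"
  unfolding quasi_cocommutative_def by (simp add: Delta_scale lin_scale[OF linear_flip] s2_mult_left s2_mult_right)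

definition qcc_first_legs :: "'h \<Rightarrow> bool" where
  "qcc_first_legs x \<longleftrightarrow> (\<exists>(M::(nat \<times> nat) set) Y Z.
     \<Delta> x = (\<Sum>m\<in>M. t2 (Y m) (Z m)) \<and> (\<forall>m\<in>M. quasi_cocommutative (Y m)))"

abbreviation drinfeld :: 'h where
  "drinfeld \<equiv> drinfeld_u sH s2 t2 S R"

lemma bilinear_drinfeld: "bilinear_map sH sH (\<lambda>a b. S b * a)"
  by (rule bilinear_mapI; rule linearI[OF vs_H vs_H]; simp add: linear_simps)

lemma drinfeld_sweedler: "drinfeld = sweedler (\<lambda>a b. S b * a) R"
  unfolding drinfeld_u_def by (rule lift2_eq_sweedler[OF vs_H bilinear_drinfeld])

text \<open>Apply \<open>c \<otimes> d \<mapsto> S(d) c\<close> to both sides of \<open>\<Delta>\<^sup>o\<^sup>p(y) R = R \<Delta>(y)\<close>.\<close>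

lemma drinfeld_sandwich:
  assumes "quasi_cocommutative y"
  shows "sweedler (\<lambda>p q. S q * drinfeld * p) (\<Delta> y) = sH (\<epsilon> y) drinfeld"
proof -
  let ?f = "\<lambda>c d. S d * c"
  have bil: "bilinear_map sH sH (\<lambda>c d. sweedler (\<lambda>a b. S (d * b) * (c * a)) R)"
    by (rule bilinear_mapI; rule linearI[OF vs_H vs_H]; simp add: linear_simps sweedler_simps)
  have "sweedler ?f (R * \<Delta> y) = sweedler (\<lambda>a b. sweedler (\<lambda>p q. S q * (S b * a) * p) (\<Delta> y)) R"
    by (simp add: sweedler_mult[OF vs_H bilinear_drinfeld, symmetric] S_mult mult.assoc)
  also have "\<dots> = sweedler (\<lambda>p q. S q * drinfeld * p) (\<Delta> y)"
    unfolding drinfeld_sweedler by (subst sweedler_swap) (simp add: sweedler_sandwich)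
  finally have R_Delta: "sweedler ?f (R * \<Delta> y) = sweedler (\<lambda>p q. S q * drinfeld * p) (\<Delta> y)" .
  have "sweedler ?f (flip (\<Delta> y) * R) = sweedler (\<lambda>p q. sweedler (\<lambda>a b. S (p * b) * (q * a)) R) (\<Delta> y)"
    by (simp add: sweedler_mult[OF vs_H bilinear_drinfeld, symmetric] sweedler_flip[OF vs_H bil])
  also have "\<dots> = sweedler (\<lambda>a b. sweedler (\<lambda>p q. S b * (S p * q) * a) (\<Delta> y)) R"
    by (subst sweedler_swap) (simp add: S_mult mult.assoc)
  also have "\<dots> = sweedler (\<lambda>a b. S b * sweedler (\<lambda>p q. S p * q) (\<Delta> y) * a) R"
    by (simp only: sweedler_sandwich)
  also have "\<dots> = sH (\<epsilon> y) drinfeld"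
    unfolding drinfeld_sweedler by (simp add: antipode_left_sweedler linear_simps sweedler_simps)
  finally show ?thesis
    using R_Delta assms unfolding quasi_cocommutative_def by simp
qed

text \<open>Coassociativity applied to \<open>S\<^sup>2(x\<^sub>3) S(x\<^sub>2) u x\<^sub>1\<close>: one bracketing collapses to \<open>u x\<close> by the
  antipode, the other to \<open>S\<^sup>2(x) u\<close> by \<open>drinfeld_sandwich\<close> applied to the first legs.\<close>

lemma drinfeld_commute:
  assumes "qcc_first_legs x"
  shows "drinfeld * x = S (S x) * drinfeld"
proof -
  obtain M :: "(nat \<times> nat) set" and Y Z
    where M: "\<Delta> x = (\<Sum>m\<in>M. t2 (Y m) (Z m))" "\<And>m. m \<in> M \<Longrightarrow> quasi_cocommutative (Y m)"
    using assms unfolding qcc_first_legs_def by blast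
  have bil: "bilinear_map sH sH (\<lambda>c d. S (S b) * S d * drinfeld * c)" for b
    by (rule bilinear_mapI; rule linearI[OF vs_H vs_H]; simp add: linear_simps)
  have lin: "Vector_Spaces.linear sH sH (\<lambda>b. S (S b) * S d * drinfeld * c)"
    "Vector_Spaces.linear sH sH (\<lambda>z. drinfeld * z)" for c d
    by (rule linearI[OF vs_H vs_H]; simp add: linear_simps)+
  have tri: "trilinear_map sH sH (\<lambda>p q r. S (S r) * S q * drinfeld * p)"
    by (rule trilinear_mapI; rule linearI[OF vs_H vs_H]; simp add: linear_simps)
  have "sweedler (\<lambda>a b. sweedler (\<lambda>c d. S (S b) * S d * drinfeld * c) (\<Delta> a)) (\<Delta> x)
      = (\<Sum>m\<in>M. sweedler (\<lambda>c d. S (S (Z m)) * S d * drinfeld * c) (\<Delta> (Y m)))"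
    by (rule sweedler_rep[OF vs_H bilinear_sweedler_Delta_left[OF vs_H bil lin(1)] M(1)])
  also have "\<dots> = (\<Sum>m\<in>M. S (S (sH (\<epsilon> (Y m)) (Z m))) * drinfeld)"
    by (intro sum.cong refl) (simp add: sweedler_mult_left[symmetric] mult.assoc linear_simps
      drinfeld_sandwich[OF M(2), unfolded mult.assoc])
  also have "\<dots> = S (S x) * drinfeld"
    using sweedler_rep[OF vs_H bilinear_counit_left M(1)] counit_left_sweedler
    by (simp add: S_sum[symmetric] sum_distrib_right[symmetric])
  finally have first_legs: "sweedler (\<lambda>a b. sweedler (\<lambda>c d. S (S b) * S d * drinfeld * c) (\<Delta> a)) (\<Delta> x)
      = S (S x) * drinfeld" .
  have "sweedler (\<lambda>c d. S (S d) * S c * drinfeld * a) (\<Delta> b) = drinfeld * sH (\<epsilon> b) a" for a b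
    by (simp only: sweedler_mult_right[symmetric] S_antipode_sweedler) (simp add: linear_simps)
  then have "sweedler (\<lambda>a b. sweedler (\<lambda>c d. S (S d) * S c * drinfeld * a) (\<Delta> b)) (\<Delta> x) = drinfeld * x"
    using counit_right_linear[OF lin(2), of x] by simp
  with first_legs coassoc_sweedler[OF vs_H tri, of x] show ?thesis by simp
qed

end

locale sqt_rep = sqt +
  fixes I :: "nat set" and A B
  assumes finite_I: "finite I"
    and R_rep: "R = (\<Sum>i\<in>I. t2 (A i) (B i))"
    and inj_A: "inj_on A I" and independent_A: "\<not> module.dependent sH (A ` I)"
    and inj_B: "inj_on B I" and independent_B: "\<not> module.dependent sH (B ` I)"
begin

lemma lift2_R: "vector_space sV \<Longrightarrow> bilinear_map sH sV f \<Longrightarrow> lift2 s2 sV t2 f R = (\<Sum>i\<in>I. f (A i) (B i))"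
  by (rule lift2_rep[OF _ _ R_rep])

lemma sweedler_R: "vector_space sV \<Longrightarrow> bilinear_map sH sV f \<Longrightarrow> sweedler f R = (\<Sum>i\<in>I. f (A i) (B i))"
  by (rule sweedler_rep[OF _ _ R_rep])

text \<open>Axioms (1)--(4), tested against an arbitrary trilinear map and written out along the
  representation of \<open>R\<close>; for instance, (1) says \<open>(\<Delta> \<otimes> id) R = R\<^sub>1\<^sub>3 R\<^sub>2\<^sub>3\<close>.\<close>

lemma axiom1_rep:
  assumes "vector_space sV" "trilinear_map sH sV F"
  shows "(\<Sum>i\<in>I. sweedler (\<lambda>c d. F c d (B i)) (\<Delta> (A i))) = (\<Sum>i\<in>I. \<Sum>j\<in>I. F (A i) (A j) (B i * B j))"
proof -
  have "bilinear_map sH s3 (\<lambda>c d. t3 a c (b * d))" "bilinear_map sH s3 (\<lambda>a b. \<Sum>j\<in>I. t3 a (A j) (b * B j))" for a b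
    by (rule bilinear_mapI; rule linearI[OF vs_H vs_3]; simp add: multilinear_simps)+
  then have "(\<Sum>i\<in>I. sweedler (\<lambda>c d. t3 c d (B i)) (\<Delta> (A i))) = (\<Sum>i\<in>I. \<Sum>j\<in>I. t3 (A i) (A j) (B i * B j))"
    using axiom1 by (simp add: lift2_eq_sweedler[OF vs_3 bilinear_t3_12] lift2_R[OF vs_3]
      bilinear_sweedler_Delta_left[OF vs_3 bilinear_t3_12 linear_t3_3])
  from arg_cong[OF this, of "lift3 s3 sV t3 F"] show ?thesis by (simp add: lift3_apply[OF assms])
qed

lemma axiom2_rep:
  assumes "vector_space sV" "trilinear_map sH sV F"
  shows "(\<Sum>i\<in>I. sweedler (\<lambda>c d. F (A i) c d) (\<Delta> (B i))) = (\<Sum>i\<in>I. \<Sum>j\<in>I. F (A i * A j) (B j) (B i))"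
proof -
  have "bilinear_map sH s3 (\<lambda>c d. t3 (a * c) d b)" "bilinear_map sH s3 (\<lambda>a b. \<Sum>j\<in>I. t3 (a * A j) (B j) b)" for a b
    by (rule bilinear_mapI; rule linearI[OF vs_H vs_3]; simp add: multilinear_simps)+
  then have "(\<Sum>i\<in>I. sweedler (\<lambda>c d. t3 (A i) c d) (\<Delta> (B i))) = (\<Sum>i\<in>I. \<Sum>j\<in>I. t3 (A i * A j) (B j) (B i))"
    using axiom2 by (simp add: lift2_eq_sweedler[OF vs_3 bilinear_t3_23] lift2_R[OF vs_3]
      bilinear_sweedler_Delta_right[OF vs_3 bilinear_t3_23 linear_t3_1])
  from arg_cong[OF this, of "lift3 s3 sV t3 F"] show ?thesis by (simp add: lift3_apply[OF assms])
qed

lemma axiom3_rep: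
  assumes "vector_space sV" "trilinear_map sH sV F"
  shows "(\<Sum>i\<in>I. sweedler (\<lambda>b1 b2. \<Sum>j\<in>I. F (A i) (b2 * A j) (b1 * B j)) (\<Delta> (B i)))
    = (\<Sum>i\<in>I. sweedler (\<lambda>b1 b2. \<Sum>j\<in>I. F (A i) (A j * b1) (B j * b2)) (\<Delta> (B i)))"
proof -
  have bil: "bilinear_map sH s3 (\<lambda>c d. t3 a (b2 * c) (b1 * d))" "bilinear_map sH s3 (\<lambda>c d. t3 a (c * b1) (d * b2))"
    "bilinear_map sH s3 (\<lambda>b1 b2. \<Sum>j\<in>I. t3 a (b2 * A j) (b1 * B j))"
    "bilinear_map sH s3 (\<lambda>b1 b2. \<Sum>j\<in>I. t3 a (A j * b1) (B j * b2))" for a b1 b2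
    by (rule bilinear_mapI; rule linearI[OF vs_H vs_3]; simp add: multilinear_simps)+
  have lin: "Vector_Spaces.linear sH s3 (\<lambda>a. \<Sum>j\<in>I. t3 a (b2 * A j) (b1 * B j))"
    "Vector_Spaces.linear sH s3 (\<lambda>a. \<Sum>j\<in>I. t3 a (A j * b1) (B j * b2))" for b1 b2
    by (rule linearI[OF vs_H vs_3]; simp add: multilinear_simps)+
  have "(\<Sum>i\<in>I. sweedler (\<lambda>b1 b2. \<Sum>j\<in>I. t3 (A i) (b2 * A j) (b1 * B j)) (\<Delta> (B i)))
    = (\<Sum>i\<in>I. sweedler (\<lambda>b1 b2. \<Sum>j\<in>I. t3 (A i) (A j * b1) (B j * b2)) (\<Delta> (B i)))"
    using axiom3 by (simp add: lift2_R[OF vs_3] sweedler_R[OF vs_3] bil lift2_eq_sweedler[OF vs_3]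
      bilinear_sweedler_Delta_right[OF vs_3 bil(3) lin(1)] bilinear_sweedler_Delta_right[OF vs_3 bil(4) lin(2)])
  from arg_cong[OF this, of "lift3 s3 sV t3 F"] show ?thesis by (simp add: lift3_apply[OF assms])
qed

lemma axiom4_rep:
  assumes "vector_space sV" "trilinear_map sH sV F"
  shows "(\<Sum>i\<in>I. sweedler (\<lambda>a1 a2. \<Sum>j\<in>I. F (a2 * A j) (a1 * B j) (B i)) (\<Delta> (A i)))
    = (\<Sum>i\<in>I. sweedler (\<lambda>a1 a2. \<Sum>j\<in>I. F (A j * a1) (B j * a2) (B i)) (\<Delta> (A i)))"
proof -
  have bil: "bilinear_map sH s3 (\<lambda>c d. t3 (a2 * c) (a1 * d) b)" "bilinear_map sH s3 (\<lambda>c d. t3 (c * a1) (d * a2) b)"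
    "bilinear_map sH s3 (\<lambda>a1 a2. \<Sum>j\<in>I. t3 (a2 * A j) (a1 * B j) b)"
    "bilinear_map sH s3 (\<lambda>a1 a2. \<Sum>j\<in>I. t3 (A j * a1) (B j * a2) b)" for a1 a2 b
    by (rule bilinear_mapI; rule linearI[OF vs_H vs_3]; simp add: multilinear_simps)+
  have lin: "Vector_Spaces.linear sH s3 (\<lambda>b. \<Sum>j\<in>I. t3 (a2 * A j) (a1 * B j) b)"
    "Vector_Spaces.linear sH s3 (\<lambda>b. \<Sum>j\<in>I. t3 (A j * a1) (B j * a2) b)" for a1 a2
    by (rule linearI[OF vs_H vs_3]; simp add: multilinear_simps)+
  have "(\<Sum>i\<in>I. sweedler (\<lambda>a1 a2. \<Sum>j\<in>I. t3 (a2 * A j) (a1 * B j) (B i)) (\<Delta> (A i)))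
    = (\<Sum>i\<in>I. sweedler (\<lambda>a1 a2. \<Sum>j\<in>I. t3 (A j * a1) (B j * a2) (B i)) (\<Delta> (A i)))"
    using axiom4 by (simp add: lift2_R[OF vs_3] sweedler_R[OF vs_3] bil lift2_eq_sweedler[OF vs_3]
      bilinear_sweedler_Delta_left[OF vs_3 bil(3) lin(1)] bilinear_sweedler_Delta_left[OF vs_3 bil(4) lin(2)])
  from arg_cong[OF this, of "lift3 s3 sV t3 F"] show ?thesis by (simp add: lift3_apply[OF assms])
qed

lemma eps_left_legs: "(\<Sum>i\<in>I. sH (\<epsilon> (A i)) (B i)) = 1"
proof -
  define e where "e = (\<Sum>i\<in>I. sH (\<epsilon> (A i)) (B i))"
  have "trilinear_map sH s2 (\<lambda>x y z. t2 (sH (\<epsilon> x) y) z)"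
    by (rule trilinear_mapI; rule linearI[OF vs_H vs_2]; simp add: linear_simps mult.commute)
  from axiom1_rep[OF vs_2 this]
  have "R = (\<Sum>i\<in>I. \<Sum>j\<in>I. t2 (sH (\<epsilon> (A i)) (A j)) (B i * B j))"
    by (simp add: R_rep sweedler_t2_left counit_left_sweedler)
  also have "\<dots> = t2 1 e * R"
    unfolding R_rep e_def
    by (simp add: sum_distrib_left sum_distrib_right t2_mult t2_sum_right linear_simps) (rule sum.swap)
  finally have "t2 1 e = 1"
    by (intro R_right_cancel) (rule sym)
  then have "t2 1 e = t2 1 1" by (simp add: t2_one)
  then show ?thesis unfolding e_def by (rule t2_one_left_cancel)
qed

lemma eps_right_legs: "(\<Sum>i\<in>I. sH (\<epsilon> (B i)) (A i)) = 1"
proof -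
  define e where "e = (\<Sum>i\<in>I. sH (\<epsilon> (B i)) (A i))"
  have "trilinear_map sH s2 (\<lambda>x y z. t2 x (sH (\<epsilon> z) y))"
    by (rule trilinear_mapI; rule linearI[OF vs_H vs_2]; simp add: linear_simps mult.commute)
  from axiom2_rep[OF vs_2 this]
  have "R = (\<Sum>i\<in>I. \<Sum>j\<in>I. t2 (A i * A j) (sH (\<epsilon> (B i)) (B j)))"
    by (simp add: R_rep sweedler_t2_right counit_right_sweedler)
  also have "\<dots> = t2 e 1 * R"
    unfolding R_rep e_def
    by (simp add: sum_distrib_left sum_distrib_right t2_mult t2_sum_left linear_simps) (rule sum.swap)
  finally have "t2 e 1 = 1"
    by (intro R_right_cancel) (rule sym)
  then have "t2 e 1 = t2 1 1" by (simp add: t2_one)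
  then show ?thesis unfolding e_def by (rule t2_one_right_cancel)
qed

lemma S_rep_mult_R: "(\<Sum>i\<in>I. t2 (S (A i)) (B i)) * R = 1"
proof -
  have "trilinear_map sH s2 (\<lambda>x y z. t2 (S x * y) z)"
    by (rule trilinear_mapI; rule linearI[OF vs_H vs_2]; simp add: linear_simps)
  from axiom1_rep[OF vs_2 this]
  have "t2 1 (\<Sum>i\<in>I. sH (\<epsilon> (A i)) (B i)) = (\<Sum>i\<in>I. \<Sum>j\<in>I. t2 (S (A i) * A j) (B i * B j))"
    by (simp add: sweedler_t2_left antipode_left_sweedler linear_simps t2_sum_right)
  also have "\<dots> = (\<Sum>i\<in>I. t2 (S (A i)) (B i)) * R"
    unfolding R_rep by (simp add: sum_distrib_left sum_distrib_right t2_mult) (rule sum.swap)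
  finally show ?thesis by (simp add: eps_left_legs t2_one)
qed

lemma R_mult_S_rep: "R * (\<Sum>i\<in>I. t2 (S (A i)) (B i)) = 1"
proof -
  have "trilinear_map sH s2 (\<lambda>x y z. t2 (x * S y) z)"
    by (rule trilinear_mapI; rule linearI[OF vs_H vs_2]; simp add: linear_simps)
  from axiom1_rep[OF vs_2 this]
  have "t2 1 (\<Sum>i\<in>I. sH (\<epsilon> (A i)) (B i)) = (\<Sum>i\<in>I. \<Sum>j\<in>I. t2 (A i * S (A j)) (B i * B j))"
    by (simp add: sweedler_t2_left antipode_right_sweedler linear_simps t2_sum_right)
  also have "\<dots> = R * (\<Sum>i\<in>I. t2 (S (A i)) (B i))"
    unfolding R_rep by (simp add: sum_distrib_left sum_distrib_right t2_mult) (rule sum.swap)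
  finally show ?thesis by (simp add: eps_left_legs t2_one)
qed

lemma rinv_R_rep: "rinv R = (\<Sum>i\<in>I. t2 (S (A i)) (B i))"
  by (rule rinv_unique[OF R_mult_S_rep S_rep_mult_R])

lemma S_tensor_R: "S_tensor R = R"
proof -
  have "trilinear_map sH s2 (\<lambda>x y z. t2 (S x) (S y * z))"
    by (rule trilinear_mapI; rule linearI[OF vs_H vs_2]; simp add: linear_simps)
  from axiom2_rep[OF vs_2 this]
  have "t2 (S (\<Sum>i\<in>I. sH (\<epsilon> (B i)) (A i))) 1 = (\<Sum>i\<in>I. \<Sum>j\<in>I. t2 (S (A i * A j)) (S (B j) * B i))"
    by (simp add: sweedler_t2_right antipode_left_sweedler linear_simps t2_sum_left S_sum)
  also have "\<dots> = S_tensor R * rinv R"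
    unfolding rinv_R_rep S_tensor_def sweedler_R[OF vs_2 bilinear_S_tensor]
    by (simp only: sum_distrib_left sum_distrib_right t2_mult S_mult)
  finally have "S_tensor R * rinv R = 1" by (simp add: eps_right_legs S_one t2_one)
  then have "S_tensor R * rinv R * R = R" by simp
  then show ?thesis by (simp add: mult.assoc rinv_R)
qed

lemma quasi_cocommutative_S: "quasi_cocommutative x \<Longrightarrow> quasi_cocommutative (S x)"
  unfolding quasi_cocommutative_def
proof -
  assume qcc: "flip (\<Delta> x) * R = R * \<Delta> x"
  have "flip (\<Delta> (S x)) * R = S_tensor (R * \<Delta> x)"
    by (simp add: Delta_S flip_S_Delta_op S_tensor_R S_tensor_mult)
  also have "\<dots> = R * \<Delta> (S x)"
    by (simp add: qcc[symmetric] S_tensor_mult S_tensor_R Delta_S S_Delta_op_eq)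
  finally show "flip (\<Delta> (S x)) * R = R * \<Delta> (S x)" .
qed

lemma dual_functional_left_legs:
  assumes "j \<in> I"
  obtains \<phi> where "Vector_Spaces.linear sH (*) \<phi>" "\<And>X. (\<Sum>i\<in>I. s2 (\<phi> (A i)) (X i)) = X j"
proof -
  obtain \<phi> where \<phi>: "Vector_Spaces.linear sH (*) \<phi>" "\<And>i. i \<in> I \<Longrightarrow> \<phi> (A i) = (if i = j then 1 else 0)"
    using independent_dual_functional[OF vs_H inj_A independent_A assms] by blast
  moreover have "(\<Sum>i\<in>I. s2 (\<phi> (A i)) (X i)) = X j" for X
    using sum_scale_delta[OF module_2 finite_I assms, of X] \<phi>(2) by (simp cong: sum.cong)
  ultimately show thesis using that by blast
qed

lemma dual_functional_right_legs:
  assumes "j \<in> I"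
  obtains \<phi> where "Vector_Spaces.linear sH (*) \<phi>" "\<And>X. (\<Sum>i\<in>I. s2 (\<phi> (B i)) (X i)) = X j"
proof -
  obtain \<phi> where \<phi>: "Vector_Spaces.linear sH (*) \<phi>" "\<And>i. i \<in> I \<Longrightarrow> \<phi> (B i) = (if i = j then 1 else 0)"
    using independent_dual_functional[OF vs_H inj_B independent_B assms] by blast
  moreover have "(\<Sum>i\<in>I. s2 (\<phi> (B i)) (X i)) = X j" for X
    using sum_scale_delta[OF module_2 finite_I assms, of X] \<phi>(2) by (simp cong: sum.cong)
  ultimately show thesis using that by blast
qed

lemma flip_mult_R: "flip y * R = sweedler (\<lambda>a b. \<Sum>l\<in>I. t2 (b * A l) (a * B l)) y"
  unfolding flip_def R_rep by (simp add: sweedler_mult_right sum_distrib_left t2_mult sweedler_sum)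

lemma R_mult: "R * y = sweedler (\<lambda>a b. \<Sum>l\<in>I. t2 (A l * a) (B l * b)) y"
  using sweedler_mult_left[of R t2 y]
  unfolding sweedler_tensor R_rep by (simp add: sum_distrib_right t2_mult)

lemma quasi_cocommutative_left_leg:
  assumes j: "j \<in> I" shows "quasi_cocommutative (A j)"
proof -
  obtain \<phi> where \<phi>: "Vector_Spaces.linear sH (*) \<phi>" "\<And>X. (\<Sum>i\<in>I. s2 (\<phi> (B i)) (X i)) = X j"
    using dual_functional_right_legs[OF j] by blast
  have "trilinear_map sH s2 (\<lambda>x y z. s2 (\<phi> z) (t2 x y))"
    by (rule trilinear_mapI; rule linearI[OF vs_H vs_2])
      (simp_all add: linear_simps lin_add[OF \<phi>(1)] lin_scale[OF \<phi>(1)] mult.commute)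
  from axiom4_rep[OF vs_2 this]
  have "(\<Sum>i\<in>I. s2 (\<phi> (B i)) (flip (\<Delta> (A i)) * R)) = (\<Sum>i\<in>I. s2 (\<phi> (B i)) (R * \<Delta> (A i)))"
    by (simp only: flip_mult_R R_mult sweedler_scale_2[symmetric] scale_simps(5)[OF module_2])
  then show ?thesis
    unfolding quasi_cocommutative_def \<phi>(2) .
qed

lemma quasi_cocommutative_right_leg:
  assumes j: "j \<in> I" shows "quasi_cocommutative (B j)"
proof -
  obtain \<phi> where \<phi>: "Vector_Spaces.linear sH (*) \<phi>" "\<And>X. (\<Sum>i\<in>I. s2 (\<phi> (A i)) (X i)) = X j"
    using dual_functional_left_legs[OF j] by blast
  have "trilinear_map sH s2 (\<lambda>x y z. s2 (\<phi> x) (t2 y z))"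
    by (rule trilinear_mapI; rule linearI[OF vs_H vs_2])
      (simp_all add: linear_simps lin_add[OF \<phi>(1)] lin_scale[OF \<phi>(1)] mult.commute)
  from axiom3_rep[OF vs_2 this]
  have "(\<Sum>i\<in>I. s2 (\<phi> (A i)) (flip (\<Delta> (B i)) * R)) = (\<Sum>i\<in>I. s2 (\<phi> (A i)) (R * \<Delta> (B i)))"
    by (simp only: flip_mult_R R_mult sweedler_scale_2[symmetric] scale_simps(5)[OF module_2])
  then show ?thesis
    unfolding quasi_cocommutative_def \<phi>(2) .
qed

lemma qcc_first_legs_left_leg:
  assumes j: "j \<in> I" shows "qcc_first_legs (A j)"
proof -
  obtain \<phi> where \<phi>: "Vector_Spaces.linear sH (*) \<phi>" "\<And>X. (\<Sum>i\<in>I. s2 (\<phi> (B i)) (X i)) = X j"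
    using dual_functional_right_legs[OF j] by blast
  have "trilinear_map sH s2 (\<lambda>x y z. s2 (\<phi> z) (t2 x y))"
    by (rule trilinear_mapI; rule linearI[OF vs_H vs_2])
      (simp_all add: linear_simps lin_add[OF \<phi>(1)] lin_scale[OF \<phi>(1)] mult.commute)
  from axiom1_rep[OF vs_2 this]
  have "(\<Sum>i\<in>I. s2 (\<phi> (B i)) (\<Delta> (A i))) = (\<Sum>i\<in>I. \<Sum>l\<in>I. t2 (sH (\<phi> (B i * B l)) (A i)) (A l))"
    by (simp add: sweedler_scale_2 sweedler_tensor t2_scale_left)
  then have "\<Delta> (A j) = (\<Sum>m\<in>I \<times> I. t2 (sH (\<phi> (B (fst m) * B (snd m))) (A (fst m))) (A (snd m)))"
    by (simp add: \<phi>(2) sum.cartesian_product case_prod_beta)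
  then show ?thesis
    unfolding qcc_first_legs_def
    by (intro exI conjI) (auto intro!: quasi_cocommutative_scale intro: quasi_cocommutative_left_leg)
qed

lemma qcc_first_legs_right_leg:
  assumes j: "j \<in> I" shows "qcc_first_legs (B j)"
proof -
  obtain \<phi> where \<phi>: "Vector_Spaces.linear sH (*) \<phi>" "\<And>X. (\<Sum>i\<in>I. s2 (\<phi> (A i)) (X i)) = X j"
    using dual_functional_left_legs[OF j] by blast
  have "trilinear_map sH s2 (\<lambda>x y z. s2 (\<phi> x) (t2 y z))"
    by (rule trilinear_mapI; rule linearI[OF vs_H vs_2])
      (simp_all add: linear_simps lin_add[OF \<phi>(1)] lin_scale[OF \<phi>(1)] mult.commute)
  from axiom2_rep[OF vs_2 this]
  have "(\<Sum>i\<in>I. s2 (\<phi> (A i)) (\<Delta> (B i))) = (\<Sum>i\<in>I. \<Sum>l\<in>I. t2 (sH (\<phi> (A i * A l)) (B l)) (B i))"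
    by (simp add: sweedler_scale_2 sweedler_tensor t2_scale_left)
  then have "\<Delta> (B j) = (\<Sum>m\<in>I \<times> I. t2 (sH (\<phi> (A (fst m) * A (snd m))) (B (snd m))) (B (fst m)))"
    by (simp add: \<phi>(2) sum.cartesian_product case_prod_beta)
  then show ?thesis
    unfolding qcc_first_legs_def
    by (intro exI conjI) (auto intro!: quasi_cocommutative_scale intro: quasi_cocommutative_right_leg)
qed

lemma drinfeld_commute_left_leg: "i \<in> I \<Longrightarrow> drinfeld * A i = S (S (A i)) * drinfeld"
  and drinfeld_commute_right_leg: "i \<in> I \<Longrightarrow> drinfeld * B i = S (S (B i)) * drinfeld"
  by (simp_all add: drinfeld_commute qcc_first_legs_left_leg qcc_first_legs_right_leg)

lemma drinfeld_rep: "drinfeld = (\<Sum>i\<in>I. S (B i) * A i)"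
  unfolding drinfeld_sweedler by (rule sweedler_R[OF vs_H bilinear_drinfeld])

lemma S_tensor_rinv_R: "S_tensor (rinv R) = rinv R"
proof -
  have "S_tensor (rinv R) * R = 1"
    using arg_cong[OF rinv_R(1), of S_tensor] by (simp add: S_tensor_mult S_tensor_R S_tensor_one)
  then have "S_tensor (rinv R) * R * rinv R = rinv R" by simp
  then show ?thesis by (simp add: mult.assoc rinv_R)
qed

lemma Delta_drinfeld_expand:
  "\<Delta> drinfeld = (\<Sum>l\<in>I. \<Delta> (S (B l)) * (\<Sum>i\<in>I. \<Delta> (S (B i)) * t2 (A i) (A l)))"
proof -
  have "trilinear_map sH s2 (\<lambda>x y z. \<Delta> (S z) * t2 x y)"
    by (rule trilinear_mapI; rule linearI[OF vs_H vs_2]; simp add: linear_simps)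
  note axiom = axiom1_rep[OF vs_2 this]
  have "\<Delta> drinfeld = (\<Sum>i\<in>I. sweedler (\<lambda>c d. \<Delta> (S (B i)) * t2 c d) (\<Delta> (A i)))"
    unfolding drinfeld_rep by (simp add: Delta_sum Delta_mult sweedler_mult_left[symmetric] sweedler_tensor)
  also have "\<dots> = (\<Sum>i\<in>I. \<Sum>l\<in>I. \<Delta> (S (B l)) * (\<Delta> (S (B i)) * t2 (A i) (A l)))"
    unfolding axiom by (simp add: S_mult Delta_mult mult.assoc)
  also have "\<dots> = (\<Sum>l\<in>I. \<Delta> (S (B l)) * (\<Sum>i\<in>I. \<Delta> (S (B i)) * t2 (A i) (A l)))"
    by (subst sum.swap) (simp add: sum_distrib_left)
  finally show ?thesis .
qed

lemma sum_Delta_S_right_legs: "(\<Sum>i\<in>I. \<Delta> (S (B i)) * t2 (A i) y) = rinv R * t2 drinfeld y"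
proof -
  have "trilinear_map sH s2 (\<lambda>x c d. t2 (S d * x) (S c * y))"
    by (rule trilinear_mapI; rule linearI[OF vs_H vs_2]; simp add: linear_simps)
  from axiom2_rep[OF vs_2 this]
  have "(\<Sum>i\<in>I. \<Delta> (S (B i)) * t2 (A i) y) = (\<Sum>i\<in>I. \<Sum>m\<in>I. t2 (S (B i) * (A i * A m)) (S (B m) * y))"
    by (simp add: Delta_S S_Delta_op_def sweedler_mult_right t2_mult)
  also have "\<dots> = (\<Sum>m\<in>I. t2 (drinfeld * A m) (S (B m) * y))"
    unfolding drinfeld_rep by (subst sum.swap) (simp add: t2_sum_left[symmetric] sum_distrib_right mult.assoc)
  also have "\<dots> = (\<Sum>m\<in>I. t2 (S (S (A m))) (S (B m))) * t2 drinfeld y"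
    by (simp add: drinfeld_commute_left_leg sum_distrib_right t2_mult cong: sum.cong)
  also have "(\<Sum>m\<in>I. t2 (S (S (A m))) (S (B m))) = rinv R"
    using sweedler_rep[OF vs_2 bilinear_S_tensor rinv_R_rep] S_tensor_rinv_R by (simp add: S_tensor_def)
  finally show ?thesis .
qed

lemma quasi_cocommutative_rinv_R:
  assumes "quasi_cocommutative x" shows "\<Delta> x * rinv R = rinv R * flip (\<Delta> x)"
proof -
  have "rinv R * (flip (\<Delta> x) * R) * rinv R = rinv R * (R * \<Delta> x) * rinv R"
    using assms unfolding quasi_cocommutative_def by simp
  then show ?thesis by (simp add: mult.assoc rinv_R) (simp add: mult.assoc[symmetric] rinv_R)
qed

lemma sum_flip_Delta_S_right_legs:
  "(\<Sum>l\<in>I. flip (\<Delta> (S (B l))) * t2 drinfeld (A l)) = t2 1 drinfeld * (\<Sum>m\<in>I. t2 (S (B m) * drinfeld) (A m))"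
proof -
  have "trilinear_map sH s2 (\<lambda>x c d. t2 (S c * drinfeld) (S d * x))"
    by (rule trilinear_mapI; rule linearI[OF vs_H vs_2]; simp add: linear_simps)
  from axiom2_rep[OF vs_2 this]
  have "(\<Sum>l\<in>I. flip (\<Delta> (S (B l))) * t2 drinfeld (A l))
      = (\<Sum>l\<in>I. \<Sum>m\<in>I. t2 (S (B m) * drinfeld) (S (B l) * (A l * A m)))"
    by (simp add: Delta_S flip_S_Delta_op S_tensor_def sweedler_mult_right t2_mult)
  also have "\<dots> = (\<Sum>m\<in>I. t2 (S (B m) * drinfeld) (drinfeld * A m))"
    by (subst sum.swap) (simp add: t2_sum_right[symmetric] sum_distrib_right mult.assoc drinfeld_rep)
  finally show ?thesis
    by (simp add: sum_distrib_left t2_mult)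
qed

lemma sum_S_right_legs_drinfeld: "(\<Sum>m\<in>I. t2 (S (B m) * drinfeld) (A m)) = t2 drinfeld 1 * flip (rinv R)"
proof -
  have bil: "bilinear_map sH s2 (\<lambda>a b. t2 (S b * drinfeld) a)" "bilinear_map sH s2 (\<lambda>a b. t2 (S (S b) * drinfeld) (S a))"
    by (rule bilinear_mapI; rule linearI[OF vs_H vs_2]; simp add: linear_simps)+
  have "(\<Sum>m\<in>I. t2 (S (B m) * drinfeld) (A m)) = sweedler (\<lambda>a b. t2 (S b * drinfeld) a) (S_tensor R)"
    by (simp add: S_tensor_R sweedler_R[OF vs_2 bil(1)])
  also have "\<dots> = (\<Sum>m\<in>I. t2 (S (S (B m)) * drinfeld) (S (A m)))"
    by (simp add: sweedler_S_tensor[OF vs_2 bil(1)] sweedler_R[OF vs_2 bil(2)])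
  also have "\<dots> = t2 drinfeld 1 * flip (rinv R)"
    unfolding rinv_R_rep
    by (simp add: drinfeld_commute_right_leg[symmetric] t2_mult lin_sum[OF linear_flip] flip_t2
      sum_distrib_left cong: sum.cong)
  finally show ?thesis .
qed

lemma Delta_drinfeld_conj: "\<Delta> drinfeld = rinv R * t2 drinfeld drinfeld * flip (rinv R)"
proof -
  have "\<Delta> drinfeld = (\<Sum>l\<in>I. \<Delta> (S (B l)) * rinv R * t2 drinfeld (A l))"
    unfolding Delta_drinfeld_expand sum_Delta_S_right_legs by (simp add: mult.assoc)
  also have "\<dots> = (\<Sum>l\<in>I. rinv R * (flip (\<Delta> (S (B l))) * t2 drinfeld (A l)))"
    by (intro sum.cong refl) (simp add: quasi_cocommutative_rinv_R quasi_cocommutative_S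
      quasi_cocommutative_right_leg mult.assoc)
  also have "\<dots> = rinv R * (t2 1 drinfeld * (t2 drinfeld 1 * flip (rinv R)))"
    by (simp add: sum_distrib_left[symmetric] sum_flip_Delta_S_right_legs sum_S_right_legs_drinfeld)
  also have "\<dots> = rinv R * t2 drinfeld drinfeld * flip (rinv R)"
    by (simp add: mult.assoc[symmetric] t2_mult)
  finally show ?thesis .
qed

lemma S_tensor_twice_R: "(\<Sum>i\<in>I. t2 (S (S (A i))) (S (S (B i)))) = R"
proof -
  have "S_tensor R = (\<Sum>i\<in>I. t2 (S (A i)) (S (B i)))"
    unfolding S_tensor_def by (rule sweedler_R[OF vs_2 bilinear_S_tensor])
  then have "S_tensor (S_tensor R) = (\<Sum>i\<in>I. t2 (S (S (A i))) (S (S (B i))))"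
    by (simp add: lin_sum[OF linear_S_tensor] S_tensor_t2)
  then show ?thesis by (simp add: S_tensor_R)
qed

lemma drinfeld_tensor_commute_R: "t2 drinfeld drinfeld * R = R * t2 drinfeld drinfeld"
proof -
  have "t2 drinfeld drinfeld * (\<Sum>i\<in>I. t2 (A i) (B i))
      = (\<Sum>i\<in>I. t2 (S (S (A i))) (S (S (B i)))) * t2 drinfeld drinfeld"
    by (simp add: sum_distrib_left sum_distrib_right t2_mult drinfeld_commute_left_leg
      drinfeld_commute_right_leg cong: sum.cong)
  then show ?thesis by (simp only: S_tensor_twice_R R_rep[symmetric])
qed

lemma drinfeld_tensor_commute_flip_R: "t2 drinfeld drinfeld * flip R = flip R * t2 drinfeld drinfeld"
  using arg_cong[OF drinfeld_tensor_commute_R, of flip] by (simp add: flip_mult flip_t2)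

lemma flip_rinv_R: "flip R * flip (rinv R) = 1" "flip (rinv R) * flip R = 1"
  by (simp_all add: flip_mult[symmetric] rinv_R flip_one)

lemma R21R_inverse: "flip R * R * (rinv R * flip (rinv R)) = 1" "rinv R * flip (rinv R) * (flip R * R) = 1"
  by (simp_all add: mult.assoc flip_rinv_R) (simp_all add: mult.assoc[symmetric] rinv_R flip_rinv_R)

lemma rinv_R21R: "rinv (flip R * R) = rinv R * flip (rinv R)"
  by (rule rinv_unique[OF R21R_inverse])

lemma drinfeld_tensor_commute_rinv_R21R:
  "t2 drinfeld drinfeld * rinv (flip R * R) = rinv (flip R * R) * t2 drinfeld drinfeld"
proof -
  have "t2 drinfeld drinfeld * rinv R = rinv R * t2 drinfeld drinfeld"
    by (rule commute_inverse[OF drinfeld_tensor_commute_R rinv_R])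
  moreover have "t2 drinfeld drinfeld * flip (rinv R) = flip (rinv R) * t2 drinfeld drinfeld"
    by (rule commute_inverse[OF drinfeld_tensor_commute_flip_R flip_rinv_R])
  ultimately show ?thesis
    unfolding rinv_R21R by (metis mult.assoc)
qed

lemma Delta_drinfeld: "\<Delta> drinfeld = rinv (flip R * R) * t2 drinfeld drinfeld"
  using commute_inverse[OF drinfeld_tensor_commute_flip_R flip_rinv_R]
  unfolding Delta_drinfeld_conj rinv_R21R by (simp add: mult.assoc)

lemma Delta_drinfeld_right: "\<Delta> drinfeld = t2 drinfeld drinfeld * rinv (flip R * R)"
  by (simp add: Delta_drinfeld drinfeld_tensor_commute_rinv_R21R)

lemma eps_drinfeld: "\<epsilon> drinfeld = 1"
proof -
  have "\<epsilon> drinfeld = \<epsilon> (\<Sum>i\<in>I. sH (\<epsilon> (B i)) (A i))"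
    unfolding drinfeld_rep by (simp add: eps_sum eps_mult eps_S eps_scale)
  then show ?thesis by (simp add: eps_right_legs eps_one)
qed

lemma S_tensor_flip_rinv_R21R: "S_tensor (flip (rinv (flip R * R))) = rinv (flip R * R)"
proof -
  let ?M = "\<lambda>y. S_tensor (flip y)" and ?Q = "flip R * R"
  have M_mult: "?M (y * z) = ?M z * ?M y" for y z by (simp add: flip_mult S_tensor_mult)
  have M_Q: "?M ?Q = ?Q" by (simp add: flip_mult flip_flip S_tensor_mult S_tensor_flip S_tensor_R)
  have inv: "?Q * rinv ?Q = 1" "rinv ?Q * ?Q = 1" using R21R_inverse unfolding rinv_R21R .
  have "?Q * ?M (rinv ?Q) = ?M (rinv ?Q * ?Q)" "?M (rinv ?Q) * ?Q = ?M (?Q * rinv ?Q)"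
    by (subst M_mult, subst M_Q, rule refl)+
  then have "?Q * ?M (rinv ?Q) = 1" "?M (rinv ?Q) * ?Q = 1"
    by (simp_all add: inv flip_one S_tensor_one)
  from rinv_unique[OF this] show ?thesis by simp
qed

lemma Delta_S_drinfeld: "\<Delta> (S drinfeld) = rinv (flip R * R) * t2 (S drinfeld) (S drinfeld)"
  and Delta_S_drinfeld_right: "\<Delta> (S drinfeld) = t2 (S drinfeld) (S drinfeld) * rinv (flip R * R)"
  using arg_cong[OF Delta_drinfeld_right, of "\<lambda>y. S_tensor (flip y)"]
    arg_cong[OF Delta_drinfeld, of "\<lambda>y. S_tensor (flip y)"]
  by (simp_all add: Delta_S S_Delta_op_eq flip_mult S_tensor_mult flip_t2 S_tensor_t2 S_tensor_flip_rinv_R21R)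

lemma Delta_drinfeld_S_drinfeld:
  "\<Delta> (drinfeld * S drinfeld) = (rinv (flip R * R))\<^sup>2 * t2 (drinfeld * S drinfeld) (drinfeld * S drinfeld)"
  "\<Delta> (drinfeld * S drinfeld) = t2 (drinfeld * S drinfeld) (drinfeld * S drinfeld) * (rinv (flip R * R))\<^sup>2"
proof -
  let ?q = "rinv (flip R * R)"
  have "\<Delta> (drinfeld * S drinfeld) = ?q * (t2 drinfeld drinfeld * ?q) * t2 (S drinfeld) (S drinfeld)"
    by (simp add: Delta_mult Delta_drinfeld Delta_S_drinfeld mult.assoc)
  then show "\<Delta> (drinfeld * S drinfeld) = ?q\<^sup>2 * t2 (drinfeld * S drinfeld) (drinfeld * S drinfeld)"
    by (simp add: drinfeld_tensor_commute_rinv_R21R power2_eq_square mult.assoc t2_mult)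
  have comm: "?q * t2 (S drinfeld) (S drinfeld) = t2 (S drinfeld) (S drinfeld) * ?q"
    using Delta_S_drinfeld Delta_S_drinfeld_right by simp
  have "\<Delta> (drinfeld * S drinfeld) = t2 drinfeld drinfeld * (?q * t2 (S drinfeld) (S drinfeld)) * ?q"
    by (simp add: Delta_mult Delta_drinfeld_right Delta_S_drinfeld_right mult.assoc)
  also have "\<dots> = t2 drinfeld drinfeld * (t2 (S drinfeld) (S drinfeld) * ?q) * ?q"
    by (simp only: comm)
  finally show "\<Delta> (drinfeld * S drinfeld) = t2 (drinfeld * S drinfeld) (drinfeld * S drinfeld) * ?q\<^sup>2"
    by (simp add: power2_eq_square mult.assoc t2_mult[symmetric])
qed

end

context sqt
begin

lemma sqt_rep_exists: "\<exists>I A B. sqt_rep sH s2 t2 s3 t3 \<Delta> \<epsilon> S R I A B"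
proof -
  obtain I :: "nat set" and A B where min: "finite I \<and> R = (\<Sum>i\<in>I. t2 (A i) (B i)) \<and>
      (\<forall>(J::nat set) A' B'. finite J \<and> R = (\<Sum>i\<in>J. t2 (A' i) (B' i)) \<longrightarrow> card I \<le> card J)"
    using minimal_tensor_rep_exists[where \<tau> = t2, OF finite_lessThan tensor_rep[of R]] by blast
  interpret minimal_tensor_rep sH s2 t2 R I A B
    using min bilinear_t2 unfolding minimal_tensor_rep_def by auto
  interpret swapped: minimal_tensor_rep sH s2 "\<lambda>a b. t2 b a" R I B A
    by (rule swap_sides)
  have "sqt_rep sH s2 t2 s3 t3 \<Delta> \<epsilon> S R I A B"
    by unfold_locales (fact semiquasitriangular finite_index rep inj_on_left independent_left
      swapped.inj_on_left swapped.independent_left)+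
  then show ?thesis by blast
qed

lemma coproduct_drinfeld:
  defines "Q \<equiv> R21 s2 t2 R * R"
  shows "\<epsilon> drinfeld = 1 \<and>
    \<Delta> drinfeld = rinv Q * t2 drinfeld drinfeld \<and> \<Delta> drinfeld = t2 drinfeld drinfeld * rinv Q \<and>
    \<Delta> (S drinfeld) = rinv Q * t2 (S drinfeld) (S drinfeld) \<and>
    \<Delta> (S drinfeld) = t2 (S drinfeld) (S drinfeld) * rinv Q \<and>
    \<Delta> (drinfeld * S drinfeld) = (rinv Q)\<^sup>2 * t2 (drinfeld * S drinfeld) (drinfeld * S drinfeld) \<and>
    \<Delta> (drinfeld * S drinfeld) = t2 (drinfeld * S drinfeld) (drinfeld * S drinfeld) * (rinv Q)\<^sup>2"
proof -
  obtain I A B where "sqt_rep sH s2 t2 s3 t3 \<Delta> \<epsilon> S R I A B" using sqt_rep_exists by blast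
  then interpret sqt_rep sH s2 t2 s3 t3 \<Delta> \<epsilon> S R I A B .
  show ?thesis
    unfolding Q_def R21_eq_flip
    by (intro conjI eps_drinfeld Delta_drinfeld Delta_drinfeld_right Delta_S_drinfeld
      Delta_S_drinfeld_right Delta_drinfeld_S_drinfeld)
qed

end

theorem proposition3p3:
  fixes sH :: "'k::field \<Rightarrow> 'h::ring_1 \<Rightarrow> 'h"
    and s2 :: "'k \<Rightarrow> 'hh::ring_1 \<Rightarrow> 'hh" and t2 :: "'h \<Rightarrow> 'h \<Rightarrow> 'hh"
    and s3 :: "'k \<Rightarrow> 'hhh::ring_1 \<Rightarrow> 'hhh" and t3 :: "'h \<Rightarrow> 'h \<Rightarrow> 'h \<Rightarrow> 'hhh"
    and \<Delta> :: "'h \<Rightarrow> 'hh" and \<epsilon> :: "'h \<Rightarrow> 'k" and S :: "'h \<Rightarrow> 'h" and R :: 'hh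
  assumes sqt: "semiquasitriangular sH s2 t2 s3 t3 \<Delta> \<epsilon> S R"
  defines "u \<equiv> drinfeld_u sH s2 t2 S R"
    and "Q \<equiv> R21 s2 t2 R * R"
  shows "\<epsilon> u = 1 \<and>
         \<Delta> u = rinv Q * t2 u u \<and> \<Delta> u = t2 u u * rinv Q \<and>
         \<Delta> (S u) = rinv Q * t2 (S u) (S u) \<and> \<Delta> (S u) = t2 (S u) (S u) * rinv Q \<and>
         \<Delta> (u * S u) = (rinv Q) ^ 2 * t2 (u * S u) (u * S u) \<and>
         \<Delta> (u * S u) = t2 (u * S u) (u * S u) * (rinv Q) ^ 2"
  unfolding u_def Q_def by (rule sqt.coproduct_drinfeld[OF sqt.intro[OF sqt]])

end
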